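(* Let $T$, $\mathcal{S}=\mathcal{S}_+\cup\mathcal{S}_-$, $\Psi$, $\lambda,\mu$ and the matrices $E,F,G,H$ be as in the context, and let $K:=T_{++}+\Psi T_{-+}$. Let $\mathcal{R}_D$ be the minimal nonnegative solution of $\mathcal{R}^2D_{-1}+\mathcal{R}D_0+D_1=\mathcal{R}$, where $$D_{-1}=\begin{bmatrix}0&0\\0&F\end{bmatrix},\quad D_0=\begin{bmatrix}0&G\\H&0\end{bmatrix},\quad D_1=\begin{bmatrix}E&0\\0&0\end{bmatrix}.$$ Then $$\mathcal{R}_D=\begin{bmatrix}R_1&R_1\Psi\\0&0\end{bmatrix},\qquad\text{where}\quad R_1:=E(I-\Psi H)^{-1}=(I-\mu^{-1}K)^{-1}(I+\lambda^{-1}K).$$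
   Context: $T$ is the generator of a continuous-time Markov chain on a finite set $\mathcal{S}=\mathcal{S}_+\cup\mathcal{S}_-$ (disjoint, both nonempty), partitioned into blocks $T_{++},T_{+-},T_{-+},T_{--}$ according to $\mathcal{S}_\pm$. $\Psi$ is the minimal nonnegative solution of $T_{+-}+\Psi T_{--}+T_{++}\Psi+\Psi T_{-+}\Psi=0$ (the first-return probability matrix of the unit-rate fluid queue with phase generator $T$, rates $+1$ on $\mathcal{S}_+$ and $-1$ on $\mathcal{S}_-$). $\lambda,\mu>0$ satisfy $\lambda,\mu\ge\max_i|T_{ii}|$. The matrices $E$ ($|\mathcal{S}_+|\times|\mathcal{S}_+|$), $G$ ($|\mathcal{S}_+|\times|\mathcal{S}_-|$), $H$ ($|\mathcal{S}_-|\times|\mathcal{S}_+|$), $F$ ($|\mathcal{S}_-|\times|\mathcal{S}_-|$) are defined by $\begin{bmatrix}E&G\\H&F\end{bmatrix}=\begin{bmatrix}I-\mu^{-1}T_{++}&-\lambda^{-1}T_{+-}\\-\mu^{-1}T_{-+}&I-\lambda^{-1}T_{--}\end{bmatrix}^{-1}\begin{bmatrix}I+\lambda^{-1}T_{++}&\mu^{-1}T_{+-}\\\lambda^{-1}T_{-+}&I+\mu^{-1}T_{--}\end{bmatrix}$. $D_{-1},D_0,D_1$ are the transition blocks of a quasi-birth-death process (levels in $\mathbb{Z}+1/2$, phases in $\mathcal{S}$), and $\mathcal{R}_D$ is its $\mathcal{R}$-matrix (expected numbers of visits to the next level up before returning to the starting level). *)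

theory Defs
  imports "Jordan_Normal_Form.Matrix"
begin

text \<open>Matrix inverse (the two-sided inverse of a square matrix; junk if none exists).\<close>
definition minv :: "real mat \<Rightarrow> real mat" where
  "minv A = (SOME B. B \<in> carrier_mat (dim_row A) (dim_row A) \<and>
                      A * B = 1\<^sub>m (dim_row A) \<and> B * A = 1\<^sub>m (dim_row A))"

definition nonneg_mat :: "real mat \<Rightarrow> bool" where
  "nonneg_mat A \<longleftrightarrow> (\<forall>i<dim_row A. \<forall>j<dim_col A. A $$ (i,j) \<ge> 0)"

definition le_mat :: "real mat \<Rightarrow> real mat \<Rightarrow> bool" where
  "le_mat A B \<longleftrightarrow> dim_row A = dim_row B \<and> dim_col A = dim_col B \<and>
     (\<forall>i<dim_row A. \<forall>j<dim_col A. A $$ (i,j) \<le> B $$ (i,j))"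

definition min_nonneg_sol :: "nat \<Rightarrow> nat \<Rightarrow> (real mat \<Rightarrow> bool) \<Rightarrow> real mat \<Rightarrow> bool" where
  "min_nonneg_sol r c P X \<longleftrightarrow>
     X \<in> carrier_mat r c \<and> nonneg_mat X \<and> P X \<and>
     (\<forall>Y. Y \<in> carrier_mat r c \<and> nonneg_mat Y \<and> P Y \<longrightarrow> le_mat X Y)"

definition generator :: "nat \<Rightarrow> real mat \<Rightarrow> bool" where
  "generator n T \<longleftrightarrow> T \<in> carrier_mat n n \<and>
     (\<forall>i<n. \<forall>j<n. i \<noteq> j \<longrightarrow> T $$ (i,j) \<ge> 0) \<and>
     (\<forall>i<n. (\<Sum>j<n. T $$ (i,j)) = 0)"

end

theory Submission
  imports Defs "Jordan_Normal_Form.Determinant"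
begin

(* E, F, G, H are the blocks of N = A^-1 B, where A = I - T diag(alpha, beta) is a Z-matrix with
   positive row sums, so N >= 0.  Minimality of R_D kills its lower block row: R_D = [X Y; 0 0].
   With U = [I Y; 0 0] A^-1, comparing the upper block rows of U A and U B shows that
   Phi = G + Y F solves the Riccati equation, that U11 is the inverse of I - alpha K(Phi) and that
   X = U11 (I + beta K(Phi)); hence Psi <= Phi.  Conversely I - alpha K(Psi) dominates
   I - alpha K(Phi) and is therefore an M-matrix, and R1 = (I - alpha K(Psi))^-1 (I + beta K(Psi))
   satisfies R1 = E + R1 Psi H and Psi = G + R1 Psi F.  So [R1 R1 Psi; 0 0] solves the QBD
   equation, R_D lies below it, and Phi <= Psi.  Thus Phi = Psi and X = R1.  Finally Psi is
   substochastic, which makes I - beta (T-- + T-+ Psi) an M-matrix; this forces I - Psi H to be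
   injective, and E = R1 (I - Psi H) gives the first formula for R1. *)

lemma index_mult_mat_sum:
  "A \<in> carrier_mat r k \<Longrightarrow> B \<in> carrier_mat k c \<Longrightarrow> i < r \<Longrightarrow> j < c \<Longrightarrow>
   (A * B) $$ (i,j) = (\<Sum>l<k. A $$ (i,l) * B $$ (l,j))"
  by (auto simp: scalar_prod_def lessThan_atLeast0 intro!: sum.cong)

lemma index_mult_mat_vec_sum:
  "A \<in> carrier_mat r c \<Longrightarrow> x \<in> carrier_vec c \<Longrightarrow> i < r \<Longrightarrow>
   (A *\<^sub>v x) $ i = (\<Sum>j<c. A $$ (i,j) * x $ j)"
  by (auto simp: scalar_prod_def lessThan_atLeast0 intro!: sum.cong)

lemma sum_lessThan_add: "(\<Sum>j<a+b. f j) = (\<Sum>j<a. f j) + (\<Sum>j<b. f (j + a))"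
  for f :: "nat \<Rightarrow> 'a::comm_monoid_add"
proof -
  have "(\<Sum>j<a+b. f j) = (\<Sum>j<a. f j) + (\<Sum>j\<in>{a..<a+b}. f j)"
    by (metis sum.atLeastLessThan_concat le_add1 zero_le atLeast0LessThan)
  also have "(\<Sum>j\<in>{a..<a+b}. f j) = (\<Sum>j<b. f (j + a))"
    by (rule sum.reindex_bij_witness[of _ "\<lambda>j. j + a" "\<lambda>j. j - a"]) auto
  finally show ?thesis .
qed

lemma split_block_four_block_mat:
  assumes "a \<in> carrier_mat r1 c1" "b \<in> carrier_mat r1 c2" "c \<in> carrier_mat r2 c1" "d \<in> carrier_mat r2 c2"
  shows "split_block (four_block_mat a b c d) r1 c1 = (a, b, c, d)"
  using assms unfolding split_block_def Let_def by (auto intro!: eq_matI)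

lemma four_block_mat_inject:
  assumes "a \<in> carrier_mat r1 c1" "b \<in> carrier_mat r1 c2" "c \<in> carrier_mat r2 c1" "d \<in> carrier_mat r2 c2"
    and "a' \<in> carrier_mat r1 c1" "b' \<in> carrier_mat r1 c2" "c' \<in> carrier_mat r2 c1" "d' \<in> carrier_mat r2 c2"
    and "four_block_mat a b c d = four_block_mat a' b' c' d'"
  shows "a = a'" "b = b'" "c = c'" "d = d'"
  using arg_cong[OF assms(9), of "\<lambda>M. split_block M r1 c1"]
  by (simp_all add: split_block_four_block_mat[OF assms(1-4)] split_block_four_block_mat[OF assms(5-8)])

lemma mult_one_minus_smult:
  "(A::real mat) \<in> carrier_mat r k \<Longrightarrow> B \<in> carrier_mat k k \<Longrightarrow> A * (1\<^sub>m k - s \<cdot>\<^sub>m B) = A - s \<cdot>\<^sub>m (A * B)"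
  by (subst mult_minus_distrib_mat[of _ r k]) (auto simp: mult_smult_distrib)

lemma mult_one_plus_smult:
  "(A::real mat) \<in> carrier_mat r k \<Longrightarrow> B \<in> carrier_mat k k \<Longrightarrow> A * (1\<^sub>m k + s \<cdot>\<^sub>m B) = A + s \<cdot>\<^sub>m (A * B)"
  by (subst mult_add_distrib_mat[of _ r k]) (auto simp: mult_smult_distrib)

lemma mult_uminus_smult:
  "(A::real mat) \<in> carrier_mat r k \<Longrightarrow> B \<in> carrier_mat k c \<Longrightarrow> A * (- (s \<cdot>\<^sub>m B)) = - (s \<cdot>\<^sub>m (A * B))"
  by (simp add: mult_smult_distrib)

lemma one_plus_smult_mult:
  "(K::real mat) \<in> carrier_mat r r \<Longrightarrow> X \<in> carrier_mat r c \<Longrightarrow> (1\<^sub>m r + s \<cdot>\<^sub>m K) * X = X + s \<cdot>\<^sub>m (K * X)"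
  by (subst add_mult_distrib_mat[of _ r r]) (auto simp: mult_smult_assoc_mat)

lemma one_minus_smult_mult:
  "(K::real mat) \<in> carrier_mat r r \<Longrightarrow> X \<in> carrier_mat r c \<Longrightarrow> (1\<^sub>m r - s \<cdot>\<^sub>m K) * X = X - s \<cdot>\<^sub>m (K * X)"
  by (subst minus_mult_distrib_mat[of _ r r]) (auto simp: mult_smult_assoc_mat)

lemma block_row_mult_minus_smult:
  fixes U V A B :: "real mat"
  assumes "U \<in> carrier_mat r p" "V \<in> carrier_mat r q" "A \<in> carrier_mat p p" "B \<in> carrier_mat q p"
  shows "U * (1\<^sub>m p - a \<cdot>\<^sub>m A) + V * (- (a \<cdot>\<^sub>m B)) = U - a \<cdot>\<^sub>m (U * A + V * B)"
  using assms by (simp add: mult_one_minus_smult mult_uminus_smult) (rule eq_matI, simp_all add: ring_distribs)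

lemma block_row_mult_plus_smult:
  fixes U V A B :: "real mat"
  assumes "U \<in> carrier_mat r p" "V \<in> carrier_mat r q" "A \<in> carrier_mat p p" "B \<in> carrier_mat q p"
  shows "U * (1\<^sub>m p + a \<cdot>\<^sub>m A) + V * (a \<cdot>\<^sub>m B) = U + a \<cdot>\<^sub>m (U * A + V * B)"
  using assms by (simp add: mult_one_plus_smult mult_smult_distrib) (rule eq_matI, simp_all add: ring_distribs)

lemma minv_of_right_inverse:
  assumes A: "A \<in> carrier_mat n n" and B: "B \<in> carrier_mat n n" and AB: "A * B = 1\<^sub>m n"
  shows "minv A = B" "invertible_mat A" "A * minv A = 1\<^sub>m n" "minv A * A = 1\<^sub>m n"
proof -
  have BA: "B * A = 1\<^sub>m n" using mat_mult_left_right_inverse[OF A B AB] .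
  have "\<exists>C. C \<in> carrier_mat (dim_row A) (dim_row A) \<and> A * C = 1\<^sub>m (dim_row A) \<and> C * A = 1\<^sub>m (dim_row A)"
    using A B AB BA by auto
  from someI_ex[OF this] have C: "minv A \<in> carrier_mat n n" "A * minv A = 1\<^sub>m n" "minv A * A = 1\<^sub>m n"
    using A unfolding minv_def by auto
  have "minv A = minv A * (A * B)" using C by (simp add: AB)
  also have "\<dots> = (minv A * A) * B" using C A B by (simp add: assoc_mult_mat[symmetric])
  also have "\<dots> = B" using C B by simp
  finally show "minv A = B" .
  show "invertible_mat A" unfolding invertible_mat_def inverts_mat_def using A B AB BA by auto
  show "A * minv A = 1\<^sub>m n" "minv A * A = 1\<^sub>m n" using C by auto
qed

lemma minv_if_trivial_kernel:
  assumes A: "A \<in> carrier_mat n n" and ker: "\<And>w. w \<in> carrier_vec n \<Longrightarrow> A *\<^sub>v w = 0\<^sub>v n \<Longrightarrow> w = 0\<^sub>v n"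
  shows "invertible_mat A" "minv A \<in> carrier_mat n n" "A * minv A = 1\<^sub>m n" "minv A * A = 1\<^sub>m n"
proof -
  have "det A \<noteq> 0" using det_0_iff_vec_prod_zero_field[OF A] ker by auto
  from det_non_zero_imp_unit[OF A this, of "()"]
  obtain B where B: "B \<in> carrier_mat n n" "A * B = 1\<^sub>m n"
    unfolding Units_def ring_mat_def by auto
  note m = minv_of_right_inverse[OF A B]
  show "invertible_mat A" "A * minv A = 1\<^sub>m n" "minv A * A = 1\<^sub>m n" using m by auto
  show "minv A \<in> carrier_mat n n" using m B by auto
qed

lemma nonneg_matI: "(\<And>i j. i < dim_row A \<Longrightarrow> j < dim_col A \<Longrightarrow> A $$ (i,j) \<ge> 0) \<Longrightarrow> nonneg_mat A"
  unfolding nonneg_mat_def by auto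

lemma nonneg_matD: "nonneg_mat A \<Longrightarrow> i < dim_row A \<Longrightarrow> j < dim_col A \<Longrightarrow> A $$ (i,j) \<ge> 0"
  unfolding nonneg_mat_def by auto

lemma nonneg_mat_mult:
  assumes "A \<in> carrier_mat r k" "B \<in> carrier_mat k c" "nonneg_mat A" "nonneg_mat B"
  shows "nonneg_mat (A * B)"
proof (rule nonneg_matI)
  fix i j assume "i < dim_row (A * B)" "j < dim_col (A * B)"
  then have ij: "i < r" "j < c" using assms by auto
  show "(A * B) $$ (i,j) \<ge> 0" unfolding index_mult_mat_sum[OF assms(1,2) ij]
    using assms ij by (intro sum_nonneg mult_nonneg_nonneg) (auto intro!: nonneg_matD)
qed

lemma nonneg_mat_add:
  "A \<in> carrier_mat r c \<Longrightarrow> B \<in> carrier_mat r c \<Longrightarrow> nonneg_mat A \<Longrightarrow> nonneg_mat B \<Longrightarrow> nonneg_mat (A + B)"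
  unfolding nonneg_mat_def by auto

lemma nonneg_mat_smult: "nonneg_mat A \<Longrightarrow> (a::real) \<ge> 0 \<Longrightarrow> nonneg_mat (a \<cdot>\<^sub>m A)"
  unfolding nonneg_mat_def by auto

lemma nonneg_mat_zero: "nonneg_mat (0\<^sub>m r c)"
  by (intro nonneg_matI) auto

lemma nonneg_mat_one: "nonneg_mat (1\<^sub>m n)"
  by (intro nonneg_matI) auto

lemma le_matI:
  "A \<in> carrier_mat r c \<Longrightarrow> B \<in> carrier_mat r c \<Longrightarrow>
   (\<And>i j. i < r \<Longrightarrow> j < c \<Longrightarrow> A $$ (i,j) \<le> B $$ (i,j)) \<Longrightarrow> le_mat A B"
  unfolding le_mat_def by auto

lemma le_matD: "le_mat A B \<Longrightarrow> i < dim_row A \<Longrightarrow> j < dim_col A \<Longrightarrow> A $$ (i,j) \<le> B $$ (i,j)"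
  unfolding le_mat_def by auto

lemma le_mat_refl: "le_mat A A"
  unfolding le_mat_def by auto

lemma le_mat_trans: "le_mat A B \<Longrightarrow> le_mat B C \<Longrightarrow> le_mat A C"
  unfolding le_mat_def by (metis order.trans)

lemma le_mat_antisym: "le_mat A B \<Longrightarrow> le_mat B A \<Longrightarrow> A = B"
  unfolding le_mat_def by (intro eq_matI) (auto intro: order.antisym)

lemma nonneg_mat_iff_le_mat: "nonneg_mat A \<longleftrightarrow> le_mat (0\<^sub>m (dim_row A) (dim_col A)) A"
  unfolding nonneg_mat_def le_mat_def by auto

lemma le_mat_add:
  "A \<in> carrier_mat r c \<Longrightarrow> B \<in> carrier_mat r c \<Longrightarrow> A' \<in> carrier_mat r c \<Longrightarrow> B' \<in> carrier_mat r c \<Longrightarrow>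
   le_mat A A' \<Longrightarrow> le_mat B B' \<Longrightarrow> le_mat (A + B) (A' + B')"
  unfolding le_mat_def by (auto intro: add_mono)

lemma le_mat_smult: "le_mat A B \<Longrightarrow> (a::real) \<ge> 0 \<Longrightarrow> le_mat (a \<cdot>\<^sub>m A) (a \<cdot>\<^sub>m B)"
  unfolding le_mat_def by (auto intro: mult_left_mono)

lemma le_mat_mult:
  assumes c: "A \<in> carrier_mat r k" "B \<in> carrier_mat k c" "A' \<in> carrier_mat r k" "B' \<in> carrier_mat k c"
    and n: "nonneg_mat A" "nonneg_mat B" and l: "le_mat A A'" "le_mat B B'"
  shows "le_mat (A * B) (A' * B')"
proof (rule le_matI[of _ r c])
  fix i j assume ij: "i < r" "j < c"
  show "(A * B) $$ (i,j) \<le> (A' * B') $$ (i,j)"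
    unfolding index_mult_mat_sum[OF c(1,2) ij] index_mult_mat_sum[OF c(3,4) ij]
  proof (rule sum_mono)
    fix q assume q: "q \<in> {..<k}"
    show "A $$ (i,q) * B $$ (q,j) \<le> A' $$ (i,q) * B' $$ (q,j)"
      using c n ij q le_matD[OF l(1), of i q] le_matD[OF l(2), of q j]
        nonneg_matD[OF n(1), of i q] nonneg_matD[OF n(2), of q j]
      by (intro mult_mono) auto
  qed
qed (use c in auto)

lemma le_mat_four_block_iff:
  assumes c: "a \<in> carrier_mat r1 c1" "b \<in> carrier_mat r1 c2" "c \<in> carrier_mat r2 c1" "d \<in> carrier_mat r2 c2"
    "a' \<in> carrier_mat r1 c1" "b' \<in> carrier_mat r1 c2" "c' \<in> carrier_mat r2 c1" "d' \<in> carrier_mat r2 c2"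
  shows "le_mat (four_block_mat a b c d) (four_block_mat a' b' c' d') \<longleftrightarrow>
     le_mat a a' \<and> le_mat b b' \<and> le_mat c c' \<and> le_mat d d'"
proof
  assume l: "le_mat (four_block_mat a b c d) (four_block_mat a' b' c' d')"
  have e: "four_block_mat a b c d $$ (i,j) \<le> four_block_mat a' b' c' d' $$ (i,j)"
    if "i < r1 + r2" "j < c1 + c2" for i j
    using le_matD[OF l, of i j] that c by auto
  have "a $$ (i,j) \<le> a' $$ (i,j)" if "i < r1" "j < c1" for i j using e[of i j] that c by simp
  then have "le_mat a a'" using le_matI[OF c(1,5)] by blast
  moreover have "b $$ (i,j) \<le> b' $$ (i,j)" if "i < r1" "j < c2" for i j using e[of i "j + c1"] that c by simp
  then have "le_mat b b'" using le_matI[OF c(2,6)] by blast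
  moreover have "c $$ (i,j) \<le> c' $$ (i,j)" if "i < r2" "j < c1" for i j using e[of "i + r1" j] that c by simp
  then have "le_mat c c'" using le_matI[OF c(3,7)] by blast
  moreover have "d $$ (i,j) \<le> d' $$ (i,j)" if "i < r2" "j < c2" for i j
    using e[of "i + r1" "j + c1"] that c by simp
  then have "le_mat d d'" using le_matI[OF c(4,8)] by blast
  ultimately show "le_mat a a' \<and> le_mat b b' \<and> le_mat c c' \<and> le_mat d d'" by blast
next
  assume "le_mat a a' \<and> le_mat b b' \<and> le_mat c c' \<and> le_mat d d'"
  then show "le_mat (four_block_mat a b c d) (four_block_mat a' b' c' d')"
    using c unfolding le_mat_def by auto
qed

lemma nonneg_mat_four_block_iff:
  assumes "a \<in> carrier_mat r1 c1" "b \<in> carrier_mat r1 c2" "c \<in> carrier_mat r2 c1" "d \<in> carrier_mat r2 c2"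
  shows "nonneg_mat (four_block_mat a b c d) \<longleftrightarrow>
     nonneg_mat a \<and> nonneg_mat b \<and> nonneg_mat c \<and> nonneg_mat d"
  using le_mat_four_block_iff[OF zero_carrier_mat zero_carrier_mat zero_carrier_mat zero_carrier_mat assms]
    assms by (simp add: nonneg_mat_iff_le_mat)

lemma smult_pair_solve:
  fixes U S D X :: "real mat"
  assumes c: "U \<in> carrier_mat r k" "S \<in> carrier_mat r k" "D \<in> carrier_mat r k" "X \<in> carrier_mat r k"
    and eqs: "U - a \<cdot>\<^sub>m S = D" "U + b \<cdot>\<^sub>m S = X" and ab: "a + b \<noteq> 0"
  shows "S = (1 / (a + b)) \<cdot>\<^sub>m (X - D)" "U = D + a \<cdot>\<^sub>m S"
proof -
  have e: "U $$ (i,j) - a * S $$ (i,j) = D $$ (i,j)" "U $$ (i,j) + b * S $$ (i,j) = X $$ (i,j)"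
    if "i < r" "j < k" for i j
    using arg_cong[OF eqs(1), of "\<lambda>M. M $$ (i,j)"] arg_cong[OF eqs(2), of "\<lambda>M. M $$ (i,j)"] c that by auto
  have "(a + b) * S $$ (i,j) = X $$ (i,j) - D $$ (i,j)" if "i < r" "j < k" for i j
    using e[OF that] by (simp add: algebra_simps)
  then show "S = (1 / (a + b)) \<cdot>\<^sub>m (X - D)"
    using c ab by (intro eq_matI) (auto simp: field_simps)
  show "U = D + a \<cdot>\<^sub>m S" using c e by (intro eq_matI) (auto simp: algebra_simps)
qed

lemma index_smult_mult_mat_vec:
  "A \<in> carrier_mat r c \<Longrightarrow> v \<in> carrier_vec c \<Longrightarrow> i < r \<Longrightarrow> ((s \<cdot>\<^sub>m A) *\<^sub>v v) $ i = (s::real) * (A *\<^sub>v v) $ i"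
  using index_mult_mat_vec_sum[of A r c v i] index_mult_mat_vec_sum[of "s \<cdot>\<^sub>m A" r c v i]
  by (simp add: sum_distrib_left algebra_simps)

definition mat_Inf :: "nat \<Rightarrow> nat \<Rightarrow> real mat set \<Rightarrow> real mat" where
  "mat_Inf r c P = mat r c (\<lambda>(i,j). Inf ((\<lambda>X. X $$ (i,j)) ` P))"

lemma mat_Inf_props:
  assumes P: "P \<subseteq> {X. X \<in> carrier_mat r c \<and> nonneg_mat X}" and S: "S \<in> P"
  shows "mat_Inf r c P \<in> carrier_mat r c" "nonneg_mat (mat_Inf r c P)"
    and "\<And>X. X \<in> P \<Longrightarrow> le_mat (mat_Inf r c P) X"
    and "\<And>Y. Y \<in> carrier_mat r c \<Longrightarrow> (\<And>X. X \<in> P \<Longrightarrow> le_mat Y X) \<Longrightarrow> le_mat Y (mat_Inf r c P)"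
proof -
  have bdd: "bdd_below ((\<lambda>X. X $$ (i,j)) ` P)" if "i < r" "j < c" for i j
    by (rule bdd_belowI[of _ 0]) (use P that in \<open>auto dest: nonneg_matD\<close>)
  show mc: "mat_Inf r c P \<in> carrier_mat r c" unfolding mat_Inf_def by auto
  show "nonneg_mat (mat_Inf r c P)"
    using P S unfolding mat_Inf_def by (intro nonneg_matI) (auto intro!: cINF_greatest dest: nonneg_matD)
  show "le_mat (mat_Inf r c P) X" if "X \<in> P" for X
    using P that bdd mc unfolding mat_Inf_def by (intro le_matI[of _ r c]) (auto intro: cInf_lower)
  show "le_mat Y (mat_Inf r c P)" if Y: "Y \<in> carrier_mat r c" "\<And>X. X \<in> P \<Longrightarrow> le_mat Y X" for Y
  proof (rule le_matI[OF Y(1) mc])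
    fix i j assume ij: "i < r" "j < c"
    have "Y $$ (i,j) \<le> X $$ (i,j)" if "X \<in> P" for X using le_matD[OF Y(2)[OF that]] ij Y(1) by auto
    then show "Y $$ (i,j) \<le> mat_Inf r c P $$ (i,j)" unfolding mat_Inf_def using ij S by (auto intro!: cINF_greatest)
  qed
qed

text \<open>The entrywise infimum of all nonnegative supersolutions is itself a solution.\<close>
lemma min_nonneg_sol_le_supersolution:
  fixes f :: "real mat \<Rightarrow> real mat"
  assumes sol: "min_nonneg_sol r c (\<lambda>X. f X = X) R"
    and fc: "\<And>X. X \<in> carrier_mat r c \<Longrightarrow> f X \<in> carrier_mat r c"
    and fn: "\<And>X. X \<in> carrier_mat r c \<Longrightarrow> nonneg_mat X \<Longrightarrow> nonneg_mat (f X)"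
    and fm: "\<And>X Y. X \<in> carrier_mat r c \<Longrightarrow> Y \<in> carrier_mat r c \<Longrightarrow> nonneg_mat X \<Longrightarrow> le_mat X Y \<Longrightarrow>
               le_mat (f X) (f Y)"
    and S: "S \<in> carrier_mat r c" "nonneg_mat S" "le_mat (f S) S"
  shows "le_mat R S"
proof -
  define Pre where "Pre = {X. X \<in> carrier_mat r c \<and> nonneg_mat X \<and> le_mat (f X) X}"
  define m where "m = mat_Inf r c Pre"
  have SP: "S \<in> Pre" using S unfolding Pre_def by auto
  have "Pre \<subseteq> {X. X \<in> carrier_mat r c \<and> nonneg_mat X}" unfolding Pre_def by auto
  note inf = mat_Inf_props[OF this SP, folded m_def]
  have mc: "m \<in> carrier_mat r c" and mn: "nonneg_mat m" and mle: "\<And>X. X \<in> Pre \<Longrightarrow> le_mat m X"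
    using inf by auto
  have "le_mat (f m) X" if X: "X \<in> Pre" for X
    using fm[OF mc _ mn mle[OF X]] X le_mat_trans unfolding Pre_def by blast
  then have fmle: "le_mat (f m) m" using inf(4)[OF fc[OF mc]] unfolding Pre_def by blast
  have "f m \<in> Pre" unfolding Pre_def
    using fc[OF mc] fn[OF mc mn] fm[OF fc[OF mc] mc fn[OF mc mn] fmle] by auto
  then have "le_mat m (f m)" by (rule mle)
  then have "f m = m" using fmle by (rule le_mat_antisym[rotated])
  then have "le_mat R m" using sol mc mn unfolding min_nonneg_sol_def by auto
  then show ?thesis using mle[OF SP] by (rule le_mat_trans)
qed

section \<open>Row sums and Z-matrices\<close>

definition row_sum :: "real mat \<Rightarrow> nat \<Rightarrow> real" where
  "row_sum A i = (\<Sum>j<dim_col A. A $$ (i,j))"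

definition ones_vec :: "nat \<Rightarrow> real vec" where
  "ones_vec k = vec k (\<lambda>_. 1)"

lemma ones_vec_carrier[simp]: "ones_vec k \<in> carrier_vec k"
  unfolding ones_vec_def by simp

lemma index_ones_vec[simp]: "i < k \<Longrightarrow> ones_vec k $ i = 1"
  unfolding ones_vec_def by simp

lemma mult_ones_vec: "A \<in> carrier_mat r c \<Longrightarrow> i < r \<Longrightarrow> (A *\<^sub>v ones_vec c) $ i = row_sum A i"
  unfolding row_sum_def by (subst index_mult_mat_vec_sum[of A r c]) (auto simp: ones_vec_def)

lemma row_sum_add: "A \<in> carrier_mat r c \<Longrightarrow> B \<in> carrier_mat r c \<Longrightarrow> i < r \<Longrightarrow>
  row_sum (A + B) i = row_sum A i + row_sum B i"
  unfolding row_sum_def by (simp add: sum.distrib)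

lemma row_sum_diff: "A \<in> carrier_mat r c \<Longrightarrow> B \<in> carrier_mat r c \<Longrightarrow> i < r \<Longrightarrow>
  row_sum (A - B) i = row_sum A i - row_sum B i"
  unfolding row_sum_def by (simp add: sum_subtractf)

lemma row_sum_smult: "A \<in> carrier_mat r c \<Longrightarrow> i < r \<Longrightarrow> row_sum (a \<cdot>\<^sub>m A) i = a * row_sum A i"
  unfolding row_sum_def by (simp add: sum_distrib_left)

lemma row_sum_one: "i < n \<Longrightarrow> row_sum (1\<^sub>m n) i = 1"
  unfolding row_sum_def by simp

lemma row_sum_mult:
  assumes "A \<in> carrier_mat r q" "B \<in> carrier_mat q c" "i < r"
  shows "row_sum (A * B) i = (\<Sum>l<q. A $$ (i,l) * row_sum B l)"
proof -
  have "row_sum (A * B) i = (\<Sum>j<c. \<Sum>l<q. A $$ (i,l) * B $$ (l,j))"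
    unfolding row_sum_def using assms
    by (auto intro!: sum.cong simp del: index_mult_mat simp: index_mult_mat_sum[OF assms(1,2)] index_mult_mat(3))
  also have "\<dots> = (\<Sum>l<q. \<Sum>j<c. A $$ (i,l) * B $$ (l,j))" by (rule sum.swap)
  also have "\<dots> = (\<Sum>l<q. A $$ (i,l) * row_sum B l)"
    unfolding row_sum_def using assms by (simp add: sum_distrib_left)
  finally show ?thesis .
qed

lemma row_sum_mult_le:
  assumes "A \<in> carrier_mat r q" "B \<in> carrier_mat q c" "nonneg_mat A" "\<forall>l<q. row_sum B l \<le> 1" "i < r"
  shows "row_sum (A * B) i \<le> row_sum A i"
proof -
  have "row_sum (A * B) i = (\<Sum>l<q. A $$ (i,l) * row_sum B l)" by (rule row_sum_mult[OF assms(1,2,5)])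
  also have "\<dots> \<le> (\<Sum>l<q. A $$ (i,l))"
  proof (rule sum_mono)
    fix l assume l: "l \<in> {..<q}"
    have "A $$ (i,l) \<ge> 0" using nonneg_matD[OF assms(3)] assms l by auto
    then show "A $$ (i,l) * row_sum B l \<le> A $$ (i,l)" using assms(4) l by (simp add: mult_left_le)
  qed
  also have "\<dots> = row_sum A i" unfolding row_sum_def using assms by simp
  finally show ?thesis .
qed

lemma row_sum_nonneg: "nonneg_mat A \<Longrightarrow> i < dim_row A \<Longrightarrow> row_sum A i \<ge> 0"
  unfolding row_sum_def by (auto intro!: sum_nonneg simp: nonneg_mat_def)

lemma index_le_row_sum: "nonneg_mat A \<Longrightarrow> i < dim_row A \<Longrightarrow> j < dim_col A \<Longrightarrow> A $$ (i,j) \<le> row_sum A i"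
  unfolding row_sum_def nonneg_mat_def by (rule member_le_sum) auto

definition z_mat :: "real mat \<Rightarrow> bool" where
  "z_mat A \<longleftrightarrow> (\<forall>i<dim_row A. \<forall>j<dim_col A. i \<noteq> j \<longrightarrow> A $$ (i,j) \<le> 0)"

text \<open>At the most negative ratio x i / v i the corresponding row of
  A x would be negative.\<close>
lemma z_mat_monotone:
  fixes A :: "real mat" and v x :: "real vec"
  assumes A: "A \<in> carrier_mat n n" "z_mat A"
    and v: "v \<in> carrier_vec n" "\<forall>i<n. v $ i > 0" and Av: "\<forall>i<n. (A *\<^sub>v v) $ i > 0"
    and x: "x \<in> carrier_vec n" and Ax: "\<forall>i<n. (A *\<^sub>v x) $ i \<ge> 0"
  shows "\<forall>i<n. x $ i \<ge> 0"
proof (rule ccontr)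
  assume "\<not> ?thesis"
  then obtain i1 where i1: "i1 < n" "x $ i1 < 0" by auto
  define t where "t = Min ((\<lambda>i. x $ i / v $ i) ` {..<n})"
  have fin: "finite ((\<lambda>i. x $ i / v $ i) ` {..<n})" "(\<lambda>i. x $ i / v $ i) ` {..<n} \<noteq> {}"
    using i1 by auto
  then have "t \<in> (\<lambda>i. x $ i / v $ i) ` {..<n}" unfolding t_def by (rule Min_in)
  then obtain i0 where i0: "i0 < n" "x $ i0 = t * v $ i0" using v by auto
  have tle: "t \<le> x $ j / v $ j" if "j < n" for j unfolding t_def using fin that by auto
  have "t \<le> x $ i1 / v $ i1" using tle i1 by auto
  also have "\<dots> < 0" using i1 v by (simp add: divide_neg_pos)
  finally have t0: "t < 0" .
  have xj: "x $ j \<ge> t * v $ j" if "j < n" for j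
    using tle[OF that] v that by (simp add: le_divide_eq)
  have "(A *\<^sub>v x) $ i0 = (\<Sum>j<n. A $$ (i0,j) * x $ j)" using index_mult_mat_vec_sum[OF A(1) x i0(1)] .
  also have "\<dots> \<le> (\<Sum>j<n. A $$ (i0,j) * (t * v $ j))"
  proof (rule sum_mono)
    fix j assume j: "j \<in> {..<n}"
    show "A $$ (i0,j) * x $ j \<le> A $$ (i0,j) * (t * v $ j)"
    proof (cases "j = i0")
      case False
      then have "A $$ (i0,j) \<le> 0" using A i0 j unfolding z_mat_def by auto
      then show ?thesis using xj j by (simp add: mult_left_mono_neg)
    qed (use i0 in simp)
  qed
  also have "\<dots> = t * (A *\<^sub>v v) $ i0"
    using index_mult_mat_vec_sum[OF A(1) v(1) i0(1)] by (simp add: sum_distrib_left algebra_simps)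
  also have "\<dots> < 0" using Av i0 t0 by (simp add: mult_neg_pos)
  finally show False using Ax i0 by auto
qed

lemma z_mat_inverse_nonneg:
  fixes A :: "real mat" and v :: "real vec"
  assumes A: "A \<in> carrier_mat n n" "z_mat A"
    and v: "v \<in> carrier_vec n" "\<forall>i<n. v $ i > 0" and Av: "\<forall>i<n. (A *\<^sub>v v) $ i > 0"
  shows "invertible_mat A" "minv A \<in> carrier_mat n n" "A * minv A = 1\<^sub>m n" "minv A * A = 1\<^sub>m n"
    "nonneg_mat (minv A)"
proof -
  note mono = z_mat_monotone[OF A v Av]
  have ker: "w = 0\<^sub>v n" if w: "w \<in> carrier_vec n" "A *\<^sub>v w = 0\<^sub>v n" for w
  proof -
    have neg: "(A *\<^sub>v (- w)) $ i = - (A *\<^sub>v w) $ i" if i: "i < n" for i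
    proof -
      have "(A *\<^sub>v (- w)) $ i = (\<Sum>j<n. A $$ (i,j) * (- w) $ j)"
        using index_mult_mat_vec_sum[OF A(1) _ i] w by auto
      also have "\<dots> = - (\<Sum>j<n. A $$ (i,j) * w $ j)" using w by (simp add: sum_negf[symmetric])
      also have "\<dots> = - (A *\<^sub>v w) $ i" using index_mult_mat_vec_sum[OF A(1) w(1) i] by simp
      finally show ?thesis .
    qed
    have "\<forall>i<n. (- w) $ i \<ge> 0" by (rule mono) (use w neg in auto)
    moreover have "\<forall>i<n. w $ i \<ge> 0" by (rule mono) (use w in auto)
    ultimately show ?thesis using w by (intro eq_vecI) force+
  qed
  note inv = minv_if_trivial_kernel[OF A(1) ker]
  show "invertible_mat A" "minv A \<in> carrier_mat n n" "A * minv A = 1\<^sub>m n" "minv A * A = 1\<^sub>m n"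
    using inv by auto
  show "nonneg_mat (minv A)"
  proof (rule nonneg_matI)
    fix i j assume i: "i < dim_row (minv A)" and j: "j < dim_col (minv A)"
    have "(A *\<^sub>v col (minv A) j) $ k = (A * minv A) $$ (k,j)" if "k < n" for k
      using A inv(2) i j that by simp
    moreover have "j < n" using inv(2) j by auto
    ultimately have pos: "\<forall>k<n. (A *\<^sub>v col (minv A) j) $ k \<ge> 0" using inv(3) by simp
    have "\<forall>k<n. col (minv A) j $ k \<ge> 0" by (rule mono) (use inv(2) pos in auto)
    then show "minv A $$ (i,j) \<ge> 0" using i j inv(2) by auto
  qed
qed

lemma tendsto_index_mult_mat:
  fixes A B :: "nat \<Rightarrow> real mat"
  assumes "\<And>k. A k \<in> carrier_mat r q" "\<And>k. B k \<in> carrier_mat q c" "A' \<in> carrier_mat r q" "B' \<in> carrier_mat q c"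
    and "\<And>i l. i < r \<Longrightarrow> l < q \<Longrightarrow> (\<lambda>k. A k $$ (i,l)) \<longlonglongrightarrow> A' $$ (i,l)"
    and "\<And>l j. l < q \<Longrightarrow> j < c \<Longrightarrow> (\<lambda>k. B k $$ (l,j)) \<longlonglongrightarrow> B' $$ (l,j)"
    and "i < r" "j < c"
  shows "(\<lambda>k. (A k * B k) $$ (i,j)) \<longlonglongrightarrow> (A' * B') $$ (i,j)"
proof -
  have "(\<lambda>k. \<Sum>l<q. A k $$ (i,l) * B k $$ (l,j)) \<longlonglongrightarrow> (\<Sum>l<q. A' $$ (i,l) * B' $$ (l,j))"
    using assms by (intro tendsto_sum tendsto_mult) auto
  then show ?thesis
    using index_mult_mat_sum[OF assms(1,2) assms(7,8)] index_mult_mat_sum[OF assms(3,4) assms(7,8)] by simp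
qed

locale fluid_qbd =
  fixes np nm :: nat and T Tpp Tpm Tmp Tmm Psi E G H F RD :: "real mat"
    and lam mu :: real
  assumes Tpp: "Tpp \<in> carrier_mat np np" and Tpm: "Tpm \<in> carrier_mat np nm"
    and Tmp: "Tmp \<in> carrier_mat nm np" and Tmm: "Tmm \<in> carrier_mat nm nm"
    and T: "T = four_block_mat Tpp Tpm Tmp Tmm"
    and gen: "generator (np + nm) T"
    and Psi: "min_nonneg_sol np nm
                (\<lambda>X. Tpm + X * Tmm + Tpp * X + X * Tmp * X = 0\<^sub>m np nm) Psi"
    and lam_pos: "lam > 0" and lam_ge: "\<forall>i<np+nm. \<bar>T $$ (i,i)\<bar> \<le> lam"
    and mu_pos: "mu > 0" and mu_ge: "\<forall>i<np+nm. \<bar>T $$ (i,i)\<bar> \<le> mu"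
    and EGHF: "four_block_mat E G H F =
       minv (four_block_mat (1\<^sub>m np - (1/mu) \<cdot>\<^sub>m Tpp) (- ((1/lam) \<cdot>\<^sub>m Tpm))
                            (- ((1/mu) \<cdot>\<^sub>m Tmp)) (1\<^sub>m nm - (1/lam) \<cdot>\<^sub>m Tmm))
       * four_block_mat (1\<^sub>m np + (1/lam) \<cdot>\<^sub>m Tpp) ((1/mu) \<cdot>\<^sub>m Tpm)
                        ((1/lam) \<cdot>\<^sub>m Tmp) (1\<^sub>m nm + (1/mu) \<cdot>\<^sub>m Tmm)"
    and E: "E \<in> carrier_mat np np" and G: "G \<in> carrier_mat np nm"
    and H: "H \<in> carrier_mat nm np" and F: "F \<in> carrier_mat nm nm"
    and RD: "min_nonneg_sol (np + nm) (np + nm)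
       (\<lambda>R. R * R * four_block_mat (0\<^sub>m np np) (0\<^sub>m np nm) (0\<^sub>m nm np) F
            + R * four_block_mat (0\<^sub>m np np) G H (0\<^sub>m nm nm)
            + four_block_mat E (0\<^sub>m np nm) (0\<^sub>m nm np) (0\<^sub>m nm nm) = R) RD"
begin

abbreviation "n \<equiv> np + nm"
abbreviation "\<alpha> \<equiv> 1 / mu"
abbreviation "\<beta> \<equiv> 1 / lam"

lemma alpha_pos: "\<alpha> > 0" and beta_pos: "\<beta> > 0"
  using lam_pos mu_pos by auto

lemma T_index: "i < n \<Longrightarrow> j < n \<Longrightarrow> T $$ (i,j) =
   (if i < np then if j < np then Tpp $$ (i,j) else Tpm $$ (i,j-np)
    else if j < np then Tmp $$ (i-np,j) else Tmm $$ (i-np,j-np))"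
  using Tpp Tpm Tmp Tmm unfolding T by simp

lemma Tpp_index: "i < np \<Longrightarrow> j < np \<Longrightarrow> Tpp $$ (i,j) = T $$ (i,j)"
  and Tpm_index: "i < np \<Longrightarrow> j < nm \<Longrightarrow> Tpm $$ (i,j) = T $$ (i,j+np)"
  and Tmp_index: "i < nm \<Longrightarrow> j < np \<Longrightarrow> Tmp $$ (i,j) = T $$ (i+np,j)"
  and Tmm_index: "i < nm \<Longrightarrow> j < nm \<Longrightarrow> Tmm $$ (i,j) = T $$ (i+np,j+np)"
  by (simp_all add: T_index)

lemma T_offdiag_nonneg: "i < n \<Longrightarrow> j < n \<Longrightarrow> i \<noteq> j \<Longrightarrow> T $$ (i,j) \<ge> 0"
  using gen unfolding generator_def by auto

lemma T_row_sum_zero: "i < n \<Longrightarrow> (\<Sum>j<n. T $$ (i,j)) = 0"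
  using gen unfolding generator_def by auto

lemma T_diag_eq: "i < n \<Longrightarrow> T $$ (i,i) = - (\<Sum>j\<in>{..<n}-{i}. T $$ (i,j))"
proof -
  assume i: "i < n"
  have "0 = (\<Sum>j<n. T $$ (i,j))" using T_row_sum_zero[OF i] by simp
  also have "\<dots> = T $$ (i,i) + (\<Sum>j\<in>{..<n}-{i}. T $$ (i,j))" using i by (simp add: sum.remove)
  finally show ?thesis by linarith
qed

lemma T_diag_nonpos: "i < n \<Longrightarrow> T $$ (i,i) \<le> 0"
proof -
  assume i: "i < n"
  have "(\<Sum>j\<in>{..<n}-{i}. T $$ (i,j)) \<ge> 0" using T_offdiag_nonneg i by (intro sum_nonneg) auto
  then show ?thesis using T_diag_eq[OF i] by linarith
qed

lemma nonneg_Tpm: "nonneg_mat Tpm"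
  using Tpm by (intro nonneg_matI) (auto simp: Tpm_index intro!: T_offdiag_nonneg)

lemma nonneg_Tmp: "nonneg_mat Tmp"
  using Tmp by (intro nonneg_matI) (auto simp: Tmp_index intro!: T_offdiag_nonneg)

lemma Tpp_offdiag_nonneg: "i < np \<Longrightarrow> j < np \<Longrightarrow> i \<noteq> j \<Longrightarrow> Tpp $$ (i,j) \<ge> 0"
  by (auto simp: Tpp_index intro!: T_offdiag_nonneg)

lemma Tmm_offdiag_nonneg: "i < nm \<Longrightarrow> j < nm \<Longrightarrow> i \<noteq> j \<Longrightarrow> Tmm $$ (i,j) \<ge> 0"
  by (auto simp: Tmm_index intro!: T_offdiag_nonneg)

lemma Tpp_diag_ge: "i < np \<Longrightarrow> Tpp $$ (i,i) \<ge> - lam"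
  using lam_ge[rule_format, of i] by (simp add: Tpp_index abs_le_iff)

lemma Tmm_diag_ge: "i < nm \<Longrightarrow> Tmm $$ (i,i) \<ge> - lam"
  using lam_ge[rule_format, of "i + np"] by (simp add: Tmm_index abs_le_iff)

lemma row_sum_Tpp: "i < np \<Longrightarrow> row_sum Tpp i = - row_sum Tpm i"
  using T_row_sum_zero[of i] Tpp Tpm unfolding row_sum_def by (simp add: sum_lessThan_add Tpp_index Tpm_index)

lemma row_sum_Tmm: "i < nm \<Longrightarrow> row_sum Tmm i = - row_sum Tmp i"
  using T_row_sum_zero[of "i + np"] Tmp Tmm unfolding row_sum_def by (simp add: sum_lessThan_add Tmp_index Tmm_index)

definition "Am = four_block_mat (1\<^sub>m np - \<alpha> \<cdot>\<^sub>m Tpp) (- (\<beta> \<cdot>\<^sub>m Tpm)) (- (\<alpha> \<cdot>\<^sub>m Tmp)) (1\<^sub>m nm - \<beta> \<cdot>\<^sub>m Tmm)"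
definition "Bm = four_block_mat (1\<^sub>m np + \<beta> \<cdot>\<^sub>m Tpp) (\<alpha> \<cdot>\<^sub>m Tpm) (\<beta> \<cdot>\<^sub>m Tmp) (1\<^sub>m nm + \<alpha> \<cdot>\<^sub>m Tmm)"
definition "N = minv Am * Bm"

lemma Am_blocks_carrier:
  "1\<^sub>m np - \<alpha> \<cdot>\<^sub>m Tpp \<in> carrier_mat np np" "- (\<beta> \<cdot>\<^sub>m Tpm) \<in> carrier_mat np nm"
  "- (\<alpha> \<cdot>\<^sub>m Tmp) \<in> carrier_mat nm np" "1\<^sub>m nm - \<beta> \<cdot>\<^sub>m Tmm \<in> carrier_mat nm nm"
  and Bm_blocks_carrier:
  "1\<^sub>m np + \<beta> \<cdot>\<^sub>m Tpp \<in> carrier_mat np np" "\<alpha> \<cdot>\<^sub>m Tpm \<in> carrier_mat np nm"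
  "\<beta> \<cdot>\<^sub>m Tmp \<in> carrier_mat nm np" "1\<^sub>m nm + \<alpha> \<cdot>\<^sub>m Tmm \<in> carrier_mat nm nm"
  using Tpp Tpm Tmp Tmm by auto

lemma Am_carrier: "Am \<in> carrier_mat n n" and Bm_carrier: "Bm \<in> carrier_mat n n"
  unfolding Am_def Bm_def using Am_blocks_carrier Bm_blocks_carrier by auto

lemma Am_index: "i < n \<Longrightarrow> j < n \<Longrightarrow>
    Am $$ (i,j) = (if i = j then 1 else 0) - T $$ (i,j) * (if j < np then \<alpha> else \<beta>)"
  and Bm_index: "i < n \<Longrightarrow> j < n \<Longrightarrow>
    Bm $$ (i,j) = (if i = j then 1 else 0) + T $$ (i,j) * (if j < np then \<beta> else \<alpha>)"
  unfolding Am_def Bm_def using Tpp Tpm Tmp Tmm by (auto simp: T_index)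

lemma z_mat_Am: "z_mat Am"
  unfolding z_mat_def using Am_carrier alpha_pos beta_pos
  by (auto simp: Am_index intro!: divide_nonneg_pos T_offdiag_nonneg)

text \<open>The off-diagonal entries of row i of T sum to - T i i, which is at most
  min lam mu, and every column scaling is at most 1 / min lam mu.\<close>
lemma row_sum_Am_pos: "i < n \<Longrightarrow> row_sum Am i > 0"
proof -
  assume i: "i < n"
  define sc where "sc j = (if j < np then \<alpha> else \<beta>)" for j
  define m0 where "m0 = min lam mu"
  define d where "d = - T $$ (i,i)"
  have m0: "m0 > 0" using lam_pos mu_pos m0_def by auto
  have sc: "0 < sc j" "sc j \<le> 1 / m0" for j
    unfolding sc_def m0_def using lam_pos mu_pos by (auto simp: frac_le min_def)
  have d: "0 \<le> d" "d \<le> m0" using T_diag_nonpos[OF i] lam_ge mu_ge i unfolding d_def m0_def by auto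
  have "row_sum Am i = (\<Sum>j<n. (if i = j then 1 else 0) - T $$ (i,j) * sc j)"
    unfolding row_sum_def sc_def using i Am_carrier by (intro sum.cong) (auto simp: Am_index)
  also have "\<dots> = 1 + d * sc i - (\<Sum>j\<in>{..<n}-{i}. T $$ (i,j) * sc j)"
    using i unfolding d_def by (simp add: sum_subtractf sum.remove[of "{..<n}" i])
  finally have eq: "row_sum Am i = 1 + d * sc i - (\<Sum>j\<in>{..<n}-{i}. T $$ (i,j) * sc j)" .
  have "(\<Sum>j\<in>{..<n}-{i}. T $$ (i,j) * sc j) \<le> (\<Sum>j\<in>{..<n}-{i}. T $$ (i,j) * (1 / m0))"
    using i T_offdiag_nonneg sc by (intro sum_mono mult_left_mono) auto
  also have "\<dots> = d / m0"
    using T_diag_eq[OF i] unfolding d_def by (simp add: sum_divide_distrib)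
  finally have ge: "row_sum Am i \<ge> 1 - d / m0 + d * sc i" using eq by simp
  show ?thesis
  proof (cases "d = 0")
    case False
    then have "d * sc i > 0" using d sc by simp
    moreover have "d / m0 \<le> 1" using d m0 by simp
    ultimately show ?thesis using ge by linarith
  qed (use ge in simp)
qed

lemma Am_inverse:
  "invertible_mat Am" "minv Am \<in> carrier_mat n n" "Am * minv Am = 1\<^sub>m n" "minv Am * Am = 1\<^sub>m n"
  "nonneg_mat (minv Am)"
  using z_mat_inverse_nonneg[OF Am_carrier z_mat_Am ones_vec_carrier[of n]]
  by (auto simp: mult_ones_vec[OF Am_carrier] row_sum_Am_pos)

lemma nonneg_Bm: "nonneg_mat Bm"
proof (rule nonneg_matI)
  fix i j assume "i < dim_row Bm" "j < dim_col Bm"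
  then have ij: "i < n" "j < n" using Bm_carrier by auto
  show "Bm $$ (i,j) \<ge> 0"
  proof (cases "i = j")
    case True
    have "\<bar>T $$ (i,i)\<bar> \<le> lam" "\<bar>T $$ (i,i)\<bar> \<le> mu" using lam_ge mu_ge ij by auto
    then have "T $$ (i,i) * (if i < np then \<beta> else \<alpha>) \<ge> -1"
      using lam_pos mu_pos by (simp add: field_simps abs_le_iff)
    then show ?thesis using True ij by (simp add: Bm_index)
  next
    case False
    then have "T $$ (i,j) \<ge> 0" using ij by (intro T_offdiag_nonneg)
    then show ?thesis using False ij alpha_pos beta_pos by (simp add: Bm_index)
  qed
qed

lemma N_carrier: "N \<in> carrier_mat n n"
  unfolding N_def using Am_inverse Bm_carrier by auto

lemma nonneg_N: "nonneg_mat N"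
  unfolding N_def using nonneg_mat_mult[OF Am_inverse(2) Bm_carrier Am_inverse(5) nonneg_Bm] .

lemma Am_mult_N: "Am * N = Bm"
  unfolding N_def using Am_inverse Am_carrier Bm_carrier by (simp add: assoc_mult_mat[symmetric])

lemma EGHF_eq_N: "four_block_mat E G H F = N"
  using EGHF unfolding N_def Am_def Bm_def .

lemma nonneg_EGHF: "nonneg_mat E" "nonneg_mat G" "nonneg_mat H" "nonneg_mat F"
  using nonneg_mat_four_block_iff[OF E G H F] nonneg_N EGHF_eq_N by auto

subsection \<open>The upper block row of R_D\<close>

definition "Dminus = four_block_mat (0\<^sub>m np np) (0\<^sub>m np nm) (0\<^sub>m nm np) F"
definition "Dzero = four_block_mat (0\<^sub>m np np) G H (0\<^sub>m nm nm)"
definition "Dplus = four_block_mat E (0\<^sub>m np nm) (0\<^sub>m nm np) (0\<^sub>m nm nm)"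
definition "qbd_map R = R * R * Dminus + R * Dzero + Dplus"

lemma D_carrier: "Dminus \<in> carrier_mat n n" "Dzero \<in> carrier_mat n n" "Dplus \<in> carrier_mat n n"
  unfolding Dminus_def Dzero_def Dplus_def using E F by auto

lemma nonneg_D: "nonneg_mat Dminus" "nonneg_mat Dzero" "nonneg_mat Dplus"
  unfolding Dminus_def Dzero_def Dplus_def using nonneg_EGHF E F G H nonneg_mat_zero
  by (auto simp: nonneg_mat_four_block_iff[of _ np np _ nm _ nm])

lemma RD_min_sol: "min_nonneg_sol n n (\<lambda>R. qbd_map R = R) RD"
  using RD unfolding qbd_map_def Dminus_def Dzero_def Dplus_def .

lemma RD_props: "RD \<in> carrier_mat n n" "nonneg_mat RD" "qbd_map RD = RD"
  using RD_min_sol unfolding min_nonneg_sol_def by auto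

lemma qbd_map_carrier: "R \<in> carrier_mat n n \<Longrightarrow> qbd_map R \<in> carrier_mat n n"
  unfolding qbd_map_def using D_carrier by auto

lemma nonneg_qbd_map: "R \<in> carrier_mat n n \<Longrightarrow> nonneg_mat R \<Longrightarrow> nonneg_mat (qbd_map R)"
  unfolding qbd_map_def using D_carrier nonneg_D
  by (meson add_carrier_mat mult_carrier_mat nonneg_mat_add nonneg_mat_mult)

lemma qbd_map_mono:
  assumes "R \<in> carrier_mat n n" "S \<in> carrier_mat n n" "nonneg_mat R" "le_mat R S"
  shows "le_mat (qbd_map R) (qbd_map S)"
proof -
  have RR: "le_mat (R * R) (S * S)" by (rule le_mat_mult[OF assms(1,1,2,2,3,3,4,4)])
  have 1: "le_mat (R * R * Dminus) (S * S * Dminus)"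
    by (rule le_mat_mult[of _ n n _ n])
      (use assms D_carrier nonneg_D RR nonneg_mat_mult le_mat_refl in auto)
  have 2: "le_mat (R * Dzero) (S * Dzero)"
    by (rule le_mat_mult[of _ n n _ n]) (use assms D_carrier nonneg_D le_mat_refl in auto)
  show ?thesis unfolding qbd_map_def
    by (rule le_mat_add[of _ n n])
      (use assms 1 2 D_carrier le_mat_refl in \<open>auto intro!: le_mat_add[of _ n n]\<close>)
qed

lemma RD_le_supersolution:
  "S \<in> carrier_mat n n \<Longrightarrow> nonneg_mat S \<Longrightarrow> le_mat (qbd_map S) S \<Longrightarrow> le_mat RD S"
  by (rule min_nonneg_sol_le_supersolution[OF RD_min_sol qbd_map_carrier nonneg_qbd_map qbd_map_mono])

lemma qbd_map_four_block:
  assumes a: "a \<in> carrier_mat np np" and b: "b \<in> carrier_mat np nm"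
    and c: "c \<in> carrier_mat nm np" and d: "d \<in> carrier_mat nm nm"
  shows "qbd_map (four_block_mat a b c d) =
    four_block_mat (b * H + E) ((a * b + b * d) * F + a * G) (d * H) ((c * b + d * d) * F + c * G)"
proof -
  let ?S = "four_block_mat a b c d"
  have SS: "?S * ?S = four_block_mat (a*a+b*c) (a*b+b*d) (c*a+d*c) (c*b+d*d)"
    by (rule mult_four_block_mat[OF a b c d a b c d])
  have c1: "a*a+b*c \<in> carrier_mat np np" "a*b+b*d \<in> carrier_mat np nm"
    "c*a+d*c \<in> carrier_mat nm np" "c*b+d*d \<in> carrier_mat nm nm" using a b c d by auto
  have SSD: "?S * ?S * Dminus = four_block_mat (0\<^sub>m np np) ((a*b+b*d) * F) (0\<^sub>m nm np) ((c*b+d*d) * F)"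
    unfolding SS Dminus_def
    by (subst mult_four_block_mat[OF c1 zero_carrier_mat zero_carrier_mat zero_carrier_mat F])
       (use c1 F a b c d mult_carrier_mat[OF c1(2) F] mult_carrier_mat[OF c1(4) F] in simp)
  have SD0: "?S * Dzero = four_block_mat (b * H) (a * G) (d * H) (c * G)"
    unfolding Dzero_def
    by (subst mult_four_block_mat[OF a b c d zero_carrier_mat G H zero_carrier_mat])
       (use a b c d G H mult_carrier_mat[OF b H] mult_carrier_mat[OF a G] mult_carrier_mat[OF d H]
          mult_carrier_mat[OF c G] in simp)
  have bl: "b * H \<in> carrier_mat np np" "a * G \<in> carrier_mat np nm" "d * H \<in> carrier_mat nm np"
    "c * G \<in> carrier_mat nm nm" "(a*b+b*d) * F \<in> carrier_mat np nm" "(c*b+d*d) * F \<in> carrier_mat nm nm"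
    using a b c d F G H by auto
  show ?thesis
    unfolding qbd_map_def SSD SD0 Dplus_def
      add_four_block_mat[OF zero_carrier_mat bl(5) zero_carrier_mat bl(6) bl(1-4)]
    using bl E by (subst add_four_block_mat[of _ np np _ nm _ nm]) (auto simp: comm_add_mat[of E])
qed

definition "RD11 = fst (split_block RD np np)"
definition "RD12 = fst (snd (split_block RD np np))"
definition "RD21 = fst (snd (snd (split_block RD np np)))"
definition "RD22 = snd (snd (snd (split_block RD np np)))"

lemma RD_blocks: "RD11 \<in> carrier_mat np np" "RD12 \<in> carrier_mat np nm" "RD21 \<in> carrier_mat nm np"
  "RD22 \<in> carrier_mat nm nm" "RD = four_block_mat RD11 RD12 RD21 RD22"
proof -
  have "split_block RD np np = (RD11, RD12, RD21, RD22)"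
    unfolding RD11_def RD12_def RD21_def RD22_def by simp
  from split_block[OF this, of nm nm] RD_props
  show "RD11 \<in> carrier_mat np np" "RD12 \<in> carrier_mat np nm" "RD21 \<in> carrier_mat nm np"
    "RD22 \<in> carrier_mat nm nm" "RD = four_block_mat RD11 RD12 RD21 RD22" by auto
qed

lemma nonneg_RD_blocks: "nonneg_mat RD11" "nonneg_mat RD12" "nonneg_mat RD21" "nonneg_mat RD22"
  using nonneg_mat_four_block_iff[OF RD_blocks(1-4)] RD_props(2) RD_blocks(5) by auto

lemma RD_block_eqs: "RD11 = RD12 * H + E" "RD12 = (RD11 * RD12 + RD12 * RD22) * F + RD11 * G"
proof -
  note c = RD_blocks(1-4)
  have "four_block_mat (RD12 * H + E) ((RD11 * RD12 + RD12 * RD22) * F + RD11 * G)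
      (RD22 * H) ((RD21 * RD12 + RD22 * RD22) * F + RD21 * G) = four_block_mat RD11 RD12 RD21 RD22"
    using RD_props(3) qbd_map_four_block[OF c] RD_blocks(5) by simp
  note e = four_block_mat_inject[OF _ _ _ _ c this]
  show "RD11 = RD12 * H + E" "RD12 = (RD11 * RD12 + RD12 * RD22) * F + RD11 * G"
    using e c E F G H by (auto simp del: assoc_mult_mat)
qed

text \<open>Minimality of R_D: cutting away its lower block row yields a nonnegative supersolution.\<close>
lemma RD_lower_blocks_zero: "RD21 = 0\<^sub>m nm np" "RD22 = 0\<^sub>m nm nm"
proof -
  note c = RD_blocks(1-4)
  let ?S = "four_block_mat RD11 RD12 (0\<^sub>m nm np) (0\<^sub>m nm nm)"
  have Sc: "?S \<in> carrier_mat n n" using c by simp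
  have Sn: "nonneg_mat ?S"
    using nonneg_RD_blocks nonneg_mat_zero nonneg_mat_four_block_iff[OF c(1,2) zero_carrier_mat zero_carrier_mat]
    by auto
  have "qbd_map ?S = four_block_mat (RD12 * H + E) ((RD11 * RD12 + RD12 * 0\<^sub>m nm nm) * F + RD11 * G)
      (0\<^sub>m nm nm * H) ((0\<^sub>m nm np * RD12 + 0\<^sub>m nm nm * 0\<^sub>m nm nm) * F + 0\<^sub>m nm np * G)"
    by (rule qbd_map_four_block) (use c in auto)
  also have "\<dots> = four_block_mat RD11 ((RD11 * RD12) * F + RD11 * G) (0\<^sub>m nm np) (0\<^sub>m nm nm)"
  proof (rule cong_four_block_mat)
    show "RD12 * H + E = RD11" using c E H RD_block_eqs(1) by (simp add: comm_add_mat[of _ np np])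
    have "RD11 * RD12 \<in> carrier_mat np nm" using c by simp
    then show "(RD11 * RD12 + RD12 * 0\<^sub>m nm nm) * F + RD11 * G = RD11 * RD12 * F + RD11 * G"
      using c by simp
  qed (use c F G H in simp_all)
  finally have fS: "qbd_map ?S = four_block_mat RD11 ((RD11 * RD12) * F + RD11 * G) (0\<^sub>m nm np) (0\<^sub>m nm nm)" .
  have "le_mat (RD11 * RD12 + 0\<^sub>m np nm) (RD11 * RD12 + RD12 * RD22)"
    by (rule le_mat_add[of _ np nm])
      (use c nonneg_RD_blocks nonneg_mat_mult[of RD12 np nm RD22] in \<open>auto simp: le_mat_refl nonneg_mat_iff_le_mat\<close>)
  then have "le_mat ((RD11 * RD12) * F) ((RD11 * RD12 + RD12 * RD22) * F)"
    by (intro le_mat_mult[of _ np nm _ nm])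
      (use c F nonneg_EGHF nonneg_RD_blocks nonneg_mat_mult[of RD11 np np RD12] le_mat_refl in auto)
  then have "le_mat ((RD11 * RD12) * F + RD11 * G) RD12"
    by (subst RD_block_eqs(2), intro le_mat_add[of _ np nm]) (use c F G le_mat_refl in auto)
  then have "le_mat (qbd_map ?S) ?S" unfolding fS
    by (subst le_mat_four_block_iff[of _ np np _ nm _ nm]) (use c F G le_mat_refl in auto)
  then have "le_mat RD ?S" using RD_le_supersolution Sc Sn by auto
  then have "le_mat RD21 (0\<^sub>m nm np)" "le_mat RD22 (0\<^sub>m nm nm)"
    using le_mat_four_block_iff[OF c, of RD11 RD12 "0\<^sub>m nm np" "0\<^sub>m nm nm"] RD_blocks(5) c by auto
  then show "RD21 = 0\<^sub>m nm np" "RD22 = 0\<^sub>m nm nm"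
    using nonneg_RD_blocks(3,4) c by (auto intro: le_mat_antisym simp: nonneg_mat_iff_le_mat)
qed

lemma RD_eq_upper_blocks: "RD = four_block_mat RD11 RD12 (0\<^sub>m nm np) (0\<^sub>m nm nm)"
  using RD_blocks(5) RD_lower_blocks_zero by simp

lemma RD12_eq: "RD12 = RD11 * RD12 * F + RD11 * G"
  using RD_block_eqs(2) RD_lower_blocks_zero RD_blocks(1,2) by simp

definition "riccati X = Tpm + X * Tmm + Tpp * X + X * Tmp * X"
definition "kmat X = Tpp + X * Tmp"
definition "pmat X = 1\<^sub>m np - \<alpha> \<cdot>\<^sub>m kmat X"
definition "rmat X = 1\<^sub>m np + \<beta> \<cdot>\<^sub>m kmat X"

lemma riccati_carrier: "X \<in> carrier_mat np nm \<Longrightarrow> riccati X \<in> carrier_mat np nm"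
  unfolding riccati_def using Tpp Tpm Tmp Tmm by auto

lemma kmat_carrier: "X \<in> carrier_mat np nm \<Longrightarrow> kmat X \<in> carrier_mat np np"
  and pmat_carrier: "X \<in> carrier_mat np nm \<Longrightarrow> pmat X \<in> carrier_mat np np"
  and rmat_carrier: "X \<in> carrier_mat np nm \<Longrightarrow> rmat X \<in> carrier_mat np np"
  unfolding kmat_def pmat_def rmat_def using Tpp Tmp by auto

lemma kmat_mult: "X \<in> carrier_mat np nm \<Longrightarrow> kmat X * X = Tpp * X + X * Tmp * X"
  unfolding kmat_def by (rule add_mult_distrib_mat[of _ np np]) (use Tpp Tmp in auto)

lemma riccati_eq: "X \<in> carrier_mat np nm \<Longrightarrow> riccati X = (Tpm + X * Tmm) + kmat X * X"
  unfolding riccati_def kmat_mult using Tpp Tpm Tmp Tmm by (simp add: assoc_add_mat[of _ np nm])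

lemma Psi_props: "Psi \<in> carrier_mat np nm" "nonneg_mat Psi" "riccati Psi = 0\<^sub>m np nm"
  "\<And>Y. Y \<in> carrier_mat np nm \<Longrightarrow> nonneg_mat Y \<Longrightarrow> riccati Y = 0\<^sub>m np nm \<Longrightarrow> le_mat Psi Y"
  using Psi unfolding min_nonneg_sol_def riccati_def by auto

subsection \<open>A Riccati solution read off from R_D\<close>

definition "Phi = G + RD12 * F"
definition "Lmat = four_block_mat (1\<^sub>m np) RD12 (0\<^sub>m nm np) (0\<^sub>m nm nm)"
definition "Umat = Lmat * minv Am"

lemma Phi_carrier: "Phi \<in> carrier_mat np nm"
  unfolding Phi_def using G RD_blocks F by auto

lemma nonneg_Phi: "nonneg_mat Phi"
  unfolding Phi_def using G RD_blocks(2) F nonneg_EGHF nonneg_RD_blocks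
  by (intro nonneg_mat_add[of _ np nm] nonneg_mat_mult[of _ np nm]) auto

lemma RD12_eq_RD11_Phi: "RD12 = RD11 * Phi"
proof -
  note c = RD_blocks(1,2)
  have "RD11 * Phi = RD11 * G + RD11 * RD12 * F" unfolding Phi_def
    using c F G by (simp add: mult_add_distrib_mat[of _ np np] assoc_mult_mat[of _ np np])
  also have "\<dots> = RD12" using RD12_eq c F G by (simp add: comm_add_mat[of _ np nm])
  finally show ?thesis by simp
qed

lemma Lmat_carrier: "Lmat \<in> carrier_mat n n"
  unfolding Lmat_def by simp

lemma Umat_carrier: "Umat \<in> carrier_mat n n"
  unfolding Umat_def using Lmat_carrier Am_inverse by auto

lemma nonneg_Umat: "nonneg_mat Umat"
proof -
  have "nonneg_mat Lmat"
    unfolding Lmat_def using nonneg_mat_four_block_iff[OF one_carrier_mat RD_blocks(2) zero_carrier_mat zero_carrier_mat]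
      nonneg_RD_blocks nonneg_mat_one nonneg_mat_zero by auto
  then show ?thesis unfolding Umat_def using nonneg_mat_mult[OF Lmat_carrier Am_inverse(2)] Am_inverse(5) by auto
qed

lemma Umat_mult_Am: "Umat * Am = Lmat"
  unfolding Umat_def using Lmat_carrier Am_inverse Am_carrier by (simp add: assoc_mult_mat[of _ n n])

lemma Umat_mult_Bm: "Umat * Bm = four_block_mat RD11 Phi (0\<^sub>m nm np) (0\<^sub>m nm nm)"
proof -
  have "Umat * Bm = Lmat * N"
    unfolding Umat_def N_def using Lmat_carrier Am_inverse Bm_carrier by (simp add: assoc_mult_mat[of _ n n])
  also have "\<dots> = four_block_mat (1\<^sub>m np * E + RD12 * H) (1\<^sub>m np * G + RD12 * F)
      (0\<^sub>m nm np * E + 0\<^sub>m nm nm * H) (0\<^sub>m nm np * G + 0\<^sub>m nm nm * F)"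
    unfolding Lmat_def EGHF_eq_N[symmetric]
    by (rule mult_four_block_mat[OF one_carrier_mat RD_blocks(2) zero_carrier_mat zero_carrier_mat E G H F])
  also have "\<dots> = four_block_mat RD11 Phi (0\<^sub>m nm np) (0\<^sub>m nm nm)"
    using RD_block_eqs(1) E F G H RD_blocks(2) unfolding Phi_def by (simp add: comm_add_mat[of E np np])
  finally show ?thesis .
qed

definition "U11 = fst (split_block Umat np np)"
definition "U12 = fst (snd (split_block Umat np np))"
definition "U21 = fst (snd (snd (split_block Umat np np)))"
definition "U22 = snd (snd (snd (split_block Umat np np)))"

lemma Umat_blocks: "U11 \<in> carrier_mat np np" "U12 \<in> carrier_mat np nm" "U21 \<in> carrier_mat nm np"
  "U22 \<in> carrier_mat nm nm" "Umat = four_block_mat U11 U12 U21 U22"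
proof -
  have "split_block Umat np np = (U11, U12, U21, U22)"
    unfolding U11_def U12_def U21_def U22_def by simp
  from split_block[OF this, of nm nm] Umat_carrier
  show "U11 \<in> carrier_mat np np" "U12 \<in> carrier_mat np nm" "U21 \<in> carrier_mat nm np"
    "U22 \<in> carrier_mat nm nm" "Umat = four_block_mat U11 U12 U21 U22" by auto
qed

lemma nonneg_U11: "nonneg_mat U11"
  using nonneg_mat_four_block_iff[OF Umat_blocks(1-4)] nonneg_Umat Umat_blocks(5) by auto

lemma Umat_Am_upper_blocks:
  "U11 * (1\<^sub>m np - \<alpha> \<cdot>\<^sub>m Tpp) + U12 * (- (\<alpha> \<cdot>\<^sub>m Tmp)) = 1\<^sub>m np"
  "U11 * (- (\<beta> \<cdot>\<^sub>m Tpm)) + U12 * (1\<^sub>m nm - \<beta> \<cdot>\<^sub>m Tmm) = RD12"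
proof -
  note u = Umat_blocks(1-4)
  have "four_block_mat
     (U11 * (1\<^sub>m np - \<alpha> \<cdot>\<^sub>m Tpp) + U12 * (- (\<alpha> \<cdot>\<^sub>m Tmp)))
     (U11 * (- (\<beta> \<cdot>\<^sub>m Tpm)) + U12 * (1\<^sub>m nm - \<beta> \<cdot>\<^sub>m Tmm))
     (U21 * (1\<^sub>m np - \<alpha> \<cdot>\<^sub>m Tpp) + U22 * (- (\<alpha> \<cdot>\<^sub>m Tmp)))
     (U21 * (- (\<beta> \<cdot>\<^sub>m Tpm)) + U22 * (1\<^sub>m nm - \<beta> \<cdot>\<^sub>m Tmm))
     = four_block_mat (1\<^sub>m np) RD12 (0\<^sub>m nm np) (0\<^sub>m nm nm)"
    using Umat_mult_Am unfolding Umat_blocks(5) Am_def Lmat_def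
    by (subst (asm) mult_four_block_mat[OF u Am_blocks_carrier])
  from four_block_mat_inject[OF _ _ _ _ _ _ _ _ this, of np np nm nm] u Am_blocks_carrier RD_blocks
  show "U11 * (1\<^sub>m np - \<alpha> \<cdot>\<^sub>m Tpp) + U12 * (- (\<alpha> \<cdot>\<^sub>m Tmp)) = 1\<^sub>m np"
    "U11 * (- (\<beta> \<cdot>\<^sub>m Tpm)) + U12 * (1\<^sub>m nm - \<beta> \<cdot>\<^sub>m Tmm) = RD12" by auto
qed

lemma Umat_Bm_upper_blocks:
  "U11 * (1\<^sub>m np + \<beta> \<cdot>\<^sub>m Tpp) + U12 * (\<beta> \<cdot>\<^sub>m Tmp) = RD11"
  "U11 * (\<alpha> \<cdot>\<^sub>m Tpm) + U12 * (1\<^sub>m nm + \<alpha> \<cdot>\<^sub>m Tmm) = Phi"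
proof -
  note u = Umat_blocks(1-4)
  have "four_block_mat
     (U11 * (1\<^sub>m np + \<beta> \<cdot>\<^sub>m Tpp) + U12 * (\<beta> \<cdot>\<^sub>m Tmp))
     (U11 * (\<alpha> \<cdot>\<^sub>m Tpm) + U12 * (1\<^sub>m nm + \<alpha> \<cdot>\<^sub>m Tmm))
     (U21 * (1\<^sub>m np + \<beta> \<cdot>\<^sub>m Tpp) + U22 * (\<beta> \<cdot>\<^sub>m Tmp))
     (U21 * (\<alpha> \<cdot>\<^sub>m Tpm) + U22 * (1\<^sub>m nm + \<alpha> \<cdot>\<^sub>m Tmm))
     = four_block_mat RD11 Phi (0\<^sub>m nm np) (0\<^sub>m nm nm)"
    using Umat_mult_Bm unfolding Umat_blocks(5) Bm_def
    by (subst (asm) mult_four_block_mat[OF u Bm_blocks_carrier])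
  from four_block_mat_inject[OF _ _ _ _ _ _ _ _ this, of np np nm nm] u Bm_blocks_carrier RD_blocks Phi_carrier
  show "U11 * (1\<^sub>m np + \<beta> \<cdot>\<^sub>m Tpp) + U12 * (\<beta> \<cdot>\<^sub>m Tmp) = RD11"
    "U11 * (\<alpha> \<cdot>\<^sub>m Tpm) + U12 * (1\<^sub>m nm + \<alpha> \<cdot>\<^sub>m Tmm) = Phi" by auto
qed

lemma Umat_upper_eqs:
  "U11 - \<alpha> \<cdot>\<^sub>m (U11 * Tpp + U12 * Tmp) = 1\<^sub>m np"
  "U11 + \<beta> \<cdot>\<^sub>m (U11 * Tpp + U12 * Tmp) = RD11"
  "U12 - \<beta> \<cdot>\<^sub>m (U11 * Tpm + U12 * Tmm) = RD12"
  "U12 + \<alpha> \<cdot>\<^sub>m (U11 * Tpm + U12 * Tmm) = Phi"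
proof -
  note u = Umat_blocks(1-4)
  note A1 = Umat_Am_upper_blocks and B1 = Umat_Bm_upper_blocks
  show "U11 - \<alpha> \<cdot>\<^sub>m (U11 * Tpp + U12 * Tmp) = 1\<^sub>m np"
    using A1(1) by (simp add: block_row_mult_minus_smult[OF u(1,2) Tpp Tmp])
  show "U11 + \<beta> \<cdot>\<^sub>m (U11 * Tpp + U12 * Tmp) = RD11"
    using B1(1) by (simp add: block_row_mult_plus_smult[OF u(1,2) Tpp Tmp])
  have "U12 * (1\<^sub>m nm - \<beta> \<cdot>\<^sub>m Tmm) + U11 * (- (\<beta> \<cdot>\<^sub>m Tpm)) = RD12"
    using A1(2) u Tpm Tmm by (subst comm_add_mat[of _ np nm]) auto
  then show "U12 - \<beta> \<cdot>\<^sub>m (U11 * Tpm + U12 * Tmm) = RD12"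
    using u Tpm Tmm
    by (simp only: block_row_mult_minus_smult[OF u(2,1) Tmm Tpm]) (simp add: comm_add_mat[of "U12 * Tmm" np nm])
  have "U12 * (1\<^sub>m nm + \<alpha> \<cdot>\<^sub>m Tmm) + U11 * (\<alpha> \<cdot>\<^sub>m Tpm) = Phi"
    using B1(2) u Tpm Tmm by (subst comm_add_mat[of _ np nm]) auto
  then show "U12 + \<alpha> \<cdot>\<^sub>m (U11 * Tpm + U12 * Tmm) = Phi"
    using u Tpm Tmm
    by (simp only: block_row_mult_plus_smult[OF u(2,1) Tmm Tpm]) (simp add: comm_add_mat[of "U12 * Tmm" np nm])
qed

lemma U11_Tpp_Tmp_eq: "U11 * Tpp + U12 * Tmp = (1 / (\<alpha> + \<beta>)) \<cdot>\<^sub>m (RD11 - 1\<^sub>m np)"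
  using smult_pair_solve(1)[OF Umat_blocks(1) _ one_carrier_mat RD_blocks(1) Umat_upper_eqs(1,2)]
    Umat_blocks Tpp Tmp alpha_pos beta_pos by auto

lemma U11_eq: "U11 = 1\<^sub>m np + \<alpha> \<cdot>\<^sub>m (U11 * Tpp + U12 * Tmp)"
  using smult_pair_solve(2)[OF Umat_blocks(1) _ one_carrier_mat RD_blocks(1) Umat_upper_eqs(1,2)]
    Umat_blocks Tpp Tmp alpha_pos beta_pos by auto

lemma U11_Tpm_Tmm_eq: "U11 * Tpm + U12 * Tmm = (1 / (\<alpha> + \<beta>)) \<cdot>\<^sub>m (Phi - RD12)"
  using smult_pair_solve(1)[OF Umat_blocks(2) _ RD_blocks(2) Phi_carrier Umat_upper_eqs(3,4)]
    Umat_blocks Tpm Tmm alpha_pos beta_pos by (simp add: add.commute)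

lemma U12_eq: "U12 = RD12 + \<beta> \<cdot>\<^sub>m (U11 * Tpm + U12 * Tmm)"
  using smult_pair_solve(2)[OF Umat_blocks(2) _ RD_blocks(2) Phi_carrier Umat_upper_eqs(3,4)]
    Umat_blocks Tpm Tmm alpha_pos beta_pos by auto

lemma U11_Tpp_Tmp_mult_Phi: "(U11 * Tpp + U12 * Tmp) * Phi = (1 / (\<alpha> + \<beta>)) \<cdot>\<^sub>m (RD12 - Phi)"
proof -
  have d: "RD11 - 1\<^sub>m np \<in> carrier_mat np np" by (rule minus_carrier_mat[OF one_carrier_mat])
  have "(U11 * Tpp + U12 * Tmp) * Phi = (1 / (\<alpha> + \<beta>)) \<cdot>\<^sub>m ((RD11 - 1\<^sub>m np) * Phi)"
    unfolding U11_Tpp_Tmp_eq by (rule mult_smult_assoc_mat[OF d Phi_carrier])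
  also have "(RD11 - 1\<^sub>m np) * Phi = RD12 - Phi"
    unfolding RD12_eq_RD11_Phi using Phi_carrier
    by (simp add: minus_mult_distrib_mat[OF RD_blocks(1) one_carrier_mat Phi_carrier])
  finally show ?thesis .
qed

lemma U11_mult_Phi: "U11 * Phi = U12"
proof -
  note c = Umat_blocks(1,2) RD_blocks(1,2) Phi_carrier
  have "U11 * Tpp + U12 * Tmp \<in> carrier_mat np np" using c Tpp Tmp by simp
  then have "U11 * Phi = Phi + \<alpha> \<cdot>\<^sub>m ((U11 * Tpp + U12 * Tmp) * Phi)"
    by (subst U11_eq) (rule one_plus_smult_mult[OF _ Phi_carrier])
  also note U11_Tpp_Tmp_mult_Phi
  finally have "U11 * Phi = Phi + \<alpha> \<cdot>\<^sub>m ((1 / (\<alpha> + \<beta>)) \<cdot>\<^sub>m (RD12 - Phi))" .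
  also have "\<dots> = RD12 + \<beta> \<cdot>\<^sub>m ((1 / (\<alpha> + \<beta>)) \<cdot>\<^sub>m (Phi - RD12))"
  proof (rule eq_matI)
    have "a * (1 / (a + b)) + b * (1 / (a + b)) = 1" if "a + b \<noteq> 0" for a b :: real
      using that by (simp add: add_divide_distrib[symmetric])
    moreover have "\<alpha> + \<beta> \<noteq> 0" using alpha_pos beta_pos by linarith
    ultimately have k: "\<alpha> * (1 / (\<alpha> + \<beta>)) + \<beta> * (1 / (\<alpha> + \<beta>)) = 1" by blast
    have shift: "p + a * (k * (y - p)) = y + b * (k * (p - y))" if "a * k + b * k = 1" for a b k p y :: real
    proof -
      have "p + a * (k * (y - p)) - (y + b * (k * (p - y))) = (p - y) * (1 - (a * k + b * k))"
        by (simp add: algebra_simps)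
      then show ?thesis using that by simp
    qed
    fix i j assume "i < dim_row (RD12 + \<beta> \<cdot>\<^sub>m ((1 / (\<alpha> + \<beta>)) \<cdot>\<^sub>m (Phi - RD12)))"
      "j < dim_col (RD12 + \<beta> \<cdot>\<^sub>m ((1 / (\<alpha> + \<beta>)) \<cdot>\<^sub>m (Phi - RD12)))"
    then show "(Phi + \<alpha> \<cdot>\<^sub>m ((1 / (\<alpha> + \<beta>)) \<cdot>\<^sub>m (RD12 - Phi))) $$ (i,j) =
      (RD12 + \<beta> \<cdot>\<^sub>m ((1 / (\<alpha> + \<beta>)) \<cdot>\<^sub>m (Phi - RD12))) $$ (i,j)"
      using shift[OF k, of "Phi $$ (i,j)" "RD12 $$ (i,j)"] c by simp
  qed (use c in auto)
  also have "\<dots> = U12" by (subst U12_eq) (simp add: U11_Tpm_Tmm_eq)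
  finally show ?thesis .
qed

lemma U11_mult_kmat_Phi: "U11 * kmat Phi = U11 * Tpp + U12 * Tmp"
  unfolding kmat_def using Umat_blocks Phi_carrier Tpp Tmp
  by (simp add: mult_add_distrib_mat[of _ np np] assoc_mult_mat[symmetric, of _ np np] U11_mult_Phi)

lemma U11_mult_pmat_Phi: "U11 * pmat Phi = 1\<^sub>m np"
  unfolding pmat_def using Umat_upper_eqs(1) Umat_blocks(1) kmat_carrier[OF Phi_carrier]
  by (simp add: mult_one_minus_smult U11_mult_kmat_Phi)

lemma pmat_Phi_mult_U11: "pmat Phi * U11 = 1\<^sub>m np"
  by (rule mat_mult_left_right_inverse[OF Umat_blocks(1) pmat_carrier[OF Phi_carrier] U11_mult_pmat_Phi])

lemma RD11_eq_U11_rmat_Phi: "RD11 = U11 * rmat Phi"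
  unfolding rmat_def using Umat_upper_eqs(2) Umat_blocks(1) kmat_carrier[OF Phi_carrier]
  by (simp add: mult_one_plus_smult U11_mult_kmat_Phi)

lemma U11_mult_Tpm_Tmm_Phi: "U11 * (Tpm + Phi * Tmm) = U11 * Tpm + U12 * Tmm"
  using Umat_blocks Phi_carrier Tpm Tmm
  by (simp add: mult_add_distrib_mat[of _ np np] assoc_mult_mat[symmetric, of _ np np] U11_mult_Phi)

lemma U11_mult_riccati_Phi: "U11 * riccati Phi = 0\<^sub>m np nm"
proof -
  note c = Umat_blocks(1) RD_blocks(2) Phi_carrier kmat_carrier[OF Phi_carrier]
  have "U11 * riccati Phi = U11 * (Tpm + Phi * Tmm) + U11 * (kmat Phi * Phi)"
    unfolding riccati_eq[OF Phi_carrier] using c Tpm Tmm by (intro mult_add_distrib_mat[of _ np np]) auto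
  also have "U11 * (kmat Phi * Phi) = (U11 * kmat Phi) * Phi"
    using c by (simp add: assoc_mult_mat[of _ np np])
  finally have "U11 * riccati Phi =
      (1 / (\<alpha> + \<beta>)) \<cdot>\<^sub>m (Phi - RD12) + (1 / (\<alpha> + \<beta>)) \<cdot>\<^sub>m (RD12 - Phi)"
    unfolding U11_mult_Tpm_Tmm_Phi U11_mult_kmat_Phi U11_Tpm_Tmm_eq U11_Tpp_Tmp_mult_Phi .
  also have "\<dots> = 0\<^sub>m np nm"
    using c by (intro eq_matI) (auto simp: algebra_simps)
  finally show ?thesis .
qed

lemma riccati_Phi: "riccati Phi = 0\<^sub>m np nm"
proof -
  note c = pmat_carrier[OF Phi_carrier] Umat_blocks(1) riccati_carrier[OF Phi_carrier]
  have "riccati Phi = (pmat Phi * U11) * riccati Phi" using c by (simp add: pmat_Phi_mult_U11)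
  also have "\<dots> = pmat Phi * (U11 * riccati Phi)" using c by (simp add: assoc_mult_mat[of _ np np])
  also have "\<dots> = 0\<^sub>m np nm" using c by (simp add: U11_mult_riccati_Phi)
  finally show ?thesis .
qed

lemma Psi_le_Phi: "le_mat Psi Phi"
  by (rule Psi_props(4)[OF Phi_carrier nonneg_Phi riccati_Phi])

subsection \<open>A solution of the QBD equation built from Psi\<close>

lemma kmat_offdiag_nonneg:
  assumes "X \<in> carrier_mat np nm" "nonneg_mat X" "i < np" "j < np" "i \<noteq> j"
  shows "kmat X $$ (i,j) \<ge> 0"
proof -
  have "(X * Tmp) $$ (i,j) \<ge> 0"
    using nonneg_matD[OF nonneg_mat_mult[OF assms(1) Tmp assms(2) nonneg_Tmp]] assms Tmp by simp
  then show ?thesis unfolding kmat_def using assms Tpp Tmp Tpp_offdiag_nonneg by simp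
qed

lemma z_mat_pmat:
  assumes "X \<in> carrier_mat np nm" "nonneg_mat X"
  shows "z_mat (pmat X)"
  unfolding z_mat_def
proof (intro allI impI)
  fix i j assume "i < dim_row (pmat X)" "j < dim_col (pmat X)" "i \<noteq> j"
  moreover from this have "kmat X $$ (i,j) \<ge> 0"
    using kmat_offdiag_nonneg[OF assms] pmat_carrier[OF assms(1)] by simp
  ultimately show "pmat X $$ (i,j) \<le> 0"
    unfolding pmat_def using pmat_carrier[OF assms(1)] kmat_carrier[OF assms(1)] alpha_pos by simp
qed

lemma nonneg_rmat: "X \<in> carrier_mat np nm \<Longrightarrow> nonneg_mat X \<Longrightarrow> nonneg_mat (rmat X)"
proof (rule nonneg_matI)
  fix i j assume X: "X \<in> carrier_mat np nm" "nonneg_mat X" and ij: "i < dim_row (rmat X)" "j < dim_col (rmat X)"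
  then have ij: "i < np" "j < np" using rmat_carrier[OF X(1)] by auto
  have XT: "(X * Tmp) $$ (i,j) \<ge> 0"
    using nonneg_matD[OF nonneg_mat_mult[OF X(1) Tmp X(2) nonneg_Tmp]] ij X Tmp by simp
  have e: "rmat X $$ (i,j) = (if i = j then 1 else 0) + \<beta> * (Tpp $$ (i,j) + (X * Tmp) $$ (i,j))"
    unfolding rmat_def kmat_def using ij X Tpp Tmp by simp
  show "rmat X $$ (i,j) \<ge> 0"
  proof (cases "i = j")
    case True
    have "\<beta> * Tpp $$ (i,i) \<ge> -1" using Tpp_diag_ge[OF ij(1)] lam_pos by (simp add: field_simps)
    moreover have "\<beta> * (X * Tmp) $$ (i,j) \<ge> 0" using XT beta_pos by simp
    ultimately show ?thesis using e True by (simp add: algebra_simps)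
  next
    case False
    then show ?thesis using e XT beta_pos Tpp_offdiag_nonneg ij by simp
  qed
qed

lemma le_pmat_Psi: "i < np \<Longrightarrow> j < np \<Longrightarrow> pmat Phi $$ (i,j) \<le> pmat Psi $$ (i,j)"
proof -
  assume ij: "i < np" "j < np"
  have "le_mat (Psi * Tmp) (Phi * Tmp)"
    by (rule le_mat_mult[OF Psi_props(1) Tmp Phi_carrier Tmp Psi_props(2) nonneg_Tmp Psi_le_Phi le_mat_refl])
  then have "(Psi * Tmp) $$ (i,j) \<le> (Phi * Tmp) $$ (i,j)" using le_matD ij Psi_props(1) Tmp by fastforce
  then have "kmat Psi $$ (i,j) \<le> kmat Phi $$ (i,j)"
    unfolding kmat_def using ij Tpp Tmp Psi_props(1) Phi_carrier by simp
  then show ?thesis unfolding pmat_def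
    using ij kmat_carrier[OF Psi_props(1)] kmat_carrier[OF Phi_carrier] alpha_pos by (simp add: divide_right_mono)
qed

text \<open>The row sums of the nonnegative inverse U11 of pmat Phi form a positive vector that
  pmat Phi maps to the all-ones vector; pmat Psi dominates pmat Phi.\<close>
lemma pmat_Psi_inverse:
  "invertible_mat (pmat Psi)" "minv (pmat Psi) \<in> carrier_mat np np"
  "pmat Psi * minv (pmat Psi) = 1\<^sub>m np" "minv (pmat Psi) * pmat Psi = 1\<^sub>m np" "nonneg_mat (minv (pmat Psi))"
proof -
  define w where "w = U11 *\<^sub>v ones_vec np"
  note c = Umat_blocks(1) pmat_carrier[OF Phi_carrier] pmat_carrier[OF Psi_props(1)]
  have w: "w \<in> carrier_vec np" unfolding w_def using c by auto
  have w_pos: "w $ i > 0" if i: "i < np" for i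
  proof (rule ccontr)
    have nn: "U11 $$ (i,j) \<ge> 0" if "j < np" for j using nonneg_U11 c i that by (auto simp: nonneg_mat_def)
    assume "\<not> w $ i > 0"
    then have "row_sum U11 i = 0"
      using mult_ones_vec[OF c(1) i] row_sum_nonneg[OF nonneg_U11] c i unfolding w_def by force
    then have z: "U11 $$ (i,j) = 0" if "j < np" for j
      using nn that c unfolding row_sum_def by (subst (asm) sum_nonneg_eq_0_iff) auto
    have "(U11 * pmat Phi) $$ (i,i) = (\<Sum>l<np. U11 $$ (i,l) * pmat Phi $$ (l,i))"
      by (rule index_mult_mat_sum[OF c(1,2) i i])
    also have "\<dots> = 0" using z by simp
    finally show False using U11_mult_pmat_Phi i by simp
  qed
  have "pmat Phi *\<^sub>v w = (pmat Phi * U11) *\<^sub>v ones_vec np"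
    unfolding w_def using c by simp
  then have Phi_w: "pmat Phi *\<^sub>v w = ones_vec np" by (simp add: pmat_Phi_mult_U11)
  have "(pmat Psi *\<^sub>v w) $ i > 0" if i: "i < np" for i
  proof -
    have "(pmat Phi *\<^sub>v w) $ i \<le> (pmat Psi *\<^sub>v w) $ i"
      unfolding index_mult_mat_vec_sum[OF c(2) w i] index_mult_mat_vec_sum[OF c(3) w i]
      using le_pmat_Psi w_pos i by (intro sum_mono mult_right_mono) (auto intro: less_imp_le)
    then show ?thesis using Phi_w i by simp
  qed
  then show "invertible_mat (pmat Psi)" "minv (pmat Psi) \<in> carrier_mat np np"
    "pmat Psi * minv (pmat Psi) = 1\<^sub>m np" "minv (pmat Psi) * pmat Psi = 1\<^sub>m np" "nonneg_mat (minv (pmat Psi))"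
    using z_mat_inverse_nonneg[OF c(3) z_mat_pmat[OF Psi_props(1,2)] w] w_pos by auto
qed

definition "R1 = minv (pmat Psi) * rmat Psi"

lemma R1_carrier: "R1 \<in> carrier_mat np np"
  unfolding R1_def using pmat_Psi_inverse rmat_carrier[OF Psi_props(1)] by auto

lemma nonneg_R1: "nonneg_mat R1"
  unfolding R1_def
  using nonneg_mat_mult[OF pmat_Psi_inverse(2) rmat_carrier[OF Psi_props(1)] pmat_Psi_inverse(5)]
    nonneg_rmat[OF Psi_props(1,2)] by blast

lemma Tpm_Psi_Tmm_eq: "Tpm + Psi * Tmm = - (kmat Psi * Psi)"
proof (rule eq_matI)
  note c = Psi_props(1) kmat_carrier[OF Psi_props(1)]
  fix i j assume "i < dim_row (- (kmat Psi * Psi))" "j < dim_col (- (kmat Psi * Psi))"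
  then have ij: "i < np" "j < nm" using c by auto
  have "(Tpm + Psi * Tmm) $$ (i,j) + (kmat Psi * Psi) $$ (i,j) = 0"
    using arg_cong[OF Psi_props(3), of "\<lambda>M. M $$ (i,j)"] ij c Tpm Tmm
    unfolding riccati_eq[OF Psi_props(1)] by simp
  then show "(Tpm + Psi * Tmm) $$ (i,j) = (- (kmat Psi * Psi)) $$ (i,j)" using ij c by simp
qed (use Psi_props(1) Tpm Tmm kmat_carrier[OF Psi_props(1)] in auto)

definition "Lpsi = four_block_mat (1\<^sub>m np) Psi (0\<^sub>m nm np) (0\<^sub>m nm nm)"

lemma Lpsi_carrier: "Lpsi \<in> carrier_mat n n"
  unfolding Lpsi_def by simp

lemma Lpsi_mult_Am: "Lpsi * Am = four_block_mat (pmat Psi) (rmat Psi * Psi) (0\<^sub>m nm np) (0\<^sub>m nm nm)"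
proof -
  note c = Psi_props(1) kmat_carrier[OF Psi_props(1)]
  have "Lpsi * Am = four_block_mat (1\<^sub>m np * (1\<^sub>m np - \<alpha> \<cdot>\<^sub>m Tpp) + Psi * (- (\<alpha> \<cdot>\<^sub>m Tmp)))
     (1\<^sub>m np * (- (\<beta> \<cdot>\<^sub>m Tpm)) + Psi * (1\<^sub>m nm - \<beta> \<cdot>\<^sub>m Tmm))
     (0\<^sub>m nm np * (1\<^sub>m np - \<alpha> \<cdot>\<^sub>m Tpp) + 0\<^sub>m nm nm * (- (\<alpha> \<cdot>\<^sub>m Tmp)))
     (0\<^sub>m nm np * (- (\<beta> \<cdot>\<^sub>m Tpm)) + 0\<^sub>m nm nm * (1\<^sub>m nm - \<beta> \<cdot>\<^sub>m Tmm))"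
    unfolding Lpsi_def Am_def
    by (rule mult_four_block_mat[OF one_carrier_mat c(1) zero_carrier_mat zero_carrier_mat Am_blocks_carrier])
  also have "\<dots> = four_block_mat (pmat Psi) (rmat Psi * Psi) (0\<^sub>m nm np) (0\<^sub>m nm nm)"
  proof (rule cong_four_block_mat)
    show "1\<^sub>m np * (1\<^sub>m np - \<alpha> \<cdot>\<^sub>m Tpp) + Psi * (- (\<alpha> \<cdot>\<^sub>m Tmp)) = pmat Psi"
      unfolding block_row_mult_minus_smult[OF one_carrier_mat c(1) Tpp Tmp] pmat_def kmat_def
      using Tpp by simp
    have "1\<^sub>m np * (- (\<beta> \<cdot>\<^sub>m Tpm)) + Psi * (1\<^sub>m nm - \<beta> \<cdot>\<^sub>m Tmm) =
        Psi * (1\<^sub>m nm - \<beta> \<cdot>\<^sub>m Tmm) + 1\<^sub>m np * (- (\<beta> \<cdot>\<^sub>m Tpm))"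
      using c Tpm Tmm by (intro comm_add_mat[of _ np nm]) auto
    also have "\<dots> = Psi - \<beta> \<cdot>\<^sub>m (Psi * Tmm + 1\<^sub>m np * Tpm)"
      by (rule block_row_mult_minus_smult[OF c(1) one_carrier_mat Tmm Tpm])
    also have "Psi * Tmm + 1\<^sub>m np * Tpm = - (kmat Psi * Psi)"
      unfolding Tpm_Psi_Tmm_eq[symmetric] using c Tpm Tmm by (simp add: comm_add_mat[of _ np nm])
    also have "Psi - \<beta> \<cdot>\<^sub>m (- (kmat Psi * Psi)) = rmat Psi * Psi"
      unfolding rmat_def one_plus_smult_mult[OF c(2,1)] using c by (intro eq_matI) auto
    finally show "1\<^sub>m np * (- (\<beta> \<cdot>\<^sub>m Tpm)) + Psi * (1\<^sub>m nm - \<beta> \<cdot>\<^sub>m Tmm) = rmat Psi * Psi" .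
  qed (use Tpp Tpm Tmp Tmm in auto)
  finally show ?thesis .
qed

lemma Lpsi_mult_Bm: "Lpsi * Bm = four_block_mat (rmat Psi) (pmat Psi * Psi) (0\<^sub>m nm np) (0\<^sub>m nm nm)"
proof -
  note c = Psi_props(1) kmat_carrier[OF Psi_props(1)]
  have "Lpsi * Bm = four_block_mat (1\<^sub>m np * (1\<^sub>m np + \<beta> \<cdot>\<^sub>m Tpp) + Psi * (\<beta> \<cdot>\<^sub>m Tmp))
     (1\<^sub>m np * (\<alpha> \<cdot>\<^sub>m Tpm) + Psi * (1\<^sub>m nm + \<alpha> \<cdot>\<^sub>m Tmm))
     (0\<^sub>m nm np * (1\<^sub>m np + \<beta> \<cdot>\<^sub>m Tpp) + 0\<^sub>m nm nm * (\<beta> \<cdot>\<^sub>m Tmp))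
     (0\<^sub>m nm np * (\<alpha> \<cdot>\<^sub>m Tpm) + 0\<^sub>m nm nm * (1\<^sub>m nm + \<alpha> \<cdot>\<^sub>m Tmm))"
    unfolding Lpsi_def Bm_def
    by (rule mult_four_block_mat[OF one_carrier_mat c(1) zero_carrier_mat zero_carrier_mat Bm_blocks_carrier])
  also have "\<dots> = four_block_mat (rmat Psi) (pmat Psi * Psi) (0\<^sub>m nm np) (0\<^sub>m nm nm)"
  proof (rule cong_four_block_mat)
    show "1\<^sub>m np * (1\<^sub>m np + \<beta> \<cdot>\<^sub>m Tpp) + Psi * (\<beta> \<cdot>\<^sub>m Tmp) = rmat Psi"
      unfolding block_row_mult_plus_smult[OF one_carrier_mat c(1) Tpp Tmp] rmat_def kmat_def
      using Tpp by simp
    have "1\<^sub>m np * (\<alpha> \<cdot>\<^sub>m Tpm) + Psi * (1\<^sub>m nm + \<alpha> \<cdot>\<^sub>m Tmm) =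
        Psi * (1\<^sub>m nm + \<alpha> \<cdot>\<^sub>m Tmm) + 1\<^sub>m np * (\<alpha> \<cdot>\<^sub>m Tpm)"
      using c Tpm Tmm by (intro comm_add_mat[of _ np nm]) auto
    also have "\<dots> = Psi + \<alpha> \<cdot>\<^sub>m (Psi * Tmm + 1\<^sub>m np * Tpm)"
      by (rule block_row_mult_plus_smult[OF c(1) one_carrier_mat Tmm Tpm])
    also have "Psi * Tmm + 1\<^sub>m np * Tpm = - (kmat Psi * Psi)"
      unfolding Tpm_Psi_Tmm_eq[symmetric] using c Tpm Tmm by (simp add: comm_add_mat[of _ np nm])
    also have "Psi + \<alpha> \<cdot>\<^sub>m (- (kmat Psi * Psi)) = pmat Psi * Psi"
      unfolding pmat_def one_minus_smult_mult[OF c(2,1)] using c by (intro eq_matI) auto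
    finally show "1\<^sub>m np * (\<alpha> \<cdot>\<^sub>m Tpm) + Psi * (1\<^sub>m nm + \<alpha> \<cdot>\<^sub>m Tmm) = pmat Psi * Psi" .
  qed (use Tpp Tpm Tmp Tmm in auto)
  finally show ?thesis .
qed

lemma pmat_rmat_EGHF_eqs:
  "pmat Psi * E + rmat Psi * Psi * H = rmat Psi" "pmat Psi * G + rmat Psi * Psi * F = pmat Psi * Psi"
proof -
  note c = pmat_carrier[OF Psi_props(1)] rmat_carrier[OF Psi_props(1)] Psi_props(1)
  have RP: "rmat Psi * Psi \<in> carrier_mat np nm" using c by auto
  have "Lpsi * Bm = (Lpsi * Am) * N"
    using Am_mult_N Lpsi_carrier Am_carrier N_carrier by (simp add: assoc_mult_mat[of _ n n])
  also have "\<dots> = four_block_mat (pmat Psi * E + rmat Psi * Psi * H) (pmat Psi * G + rmat Psi * Psi * F)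
     (0\<^sub>m nm np * E + 0\<^sub>m nm nm * H) (0\<^sub>m nm np * G + 0\<^sub>m nm nm * F)"
    unfolding Lpsi_mult_Am EGHF_eq_N[symmetric]
    by (rule mult_four_block_mat[OF c(1) RP zero_carrier_mat zero_carrier_mat E G H F])
  finally have "four_block_mat (rmat Psi) (pmat Psi * Psi) (0\<^sub>m nm np) (0\<^sub>m nm nm) =
     four_block_mat (pmat Psi * E + rmat Psi * Psi * H) (pmat Psi * G + rmat Psi * Psi * F)
     (0\<^sub>m nm np * E + 0\<^sub>m nm nm * H) (0\<^sub>m nm np * G + 0\<^sub>m nm nm * F)"
    unfolding Lpsi_mult_Bm .
  from four_block_mat_inject[OF _ _ _ _ _ _ _ _ this, of np np nm nm] c RP E G H F
  show "pmat Psi * E + rmat Psi * Psi * H = rmat Psi" "pmat Psi * G + rmat Psi * Psi * F = pmat Psi * Psi"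
    by auto
qed

text \<open>Multiplying by the inverse of pmat Psi turns the equations above into fixed-point equations.\<close>
lemma R1_eq: "R1 = E + R1 * Psi * H"
  and Psi_eq: "Psi = G + R1 * Psi * F"
proof -
  note c = pmat_Psi_inverse(2) pmat_carrier[OF Psi_props(1)] rmat_carrier[OF Psi_props(1)] Psi_props(1)
  have RP: "rmat Psi * Psi \<in> carrier_mat np nm" using c by auto
  have W: "minv (pmat Psi) * (pmat Psi * X + rmat Psi * Psi * Y) = X + R1 * Psi * Y"
    if XY: "X \<in> carrier_mat np k" "Y \<in> carrier_mat nm k" for X Y k
  proof -
    have "minv (pmat Psi) * (pmat Psi * X + rmat Psi * Psi * Y)
        = minv (pmat Psi) * (pmat Psi * X) + minv (pmat Psi) * (rmat Psi * Psi * Y)"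
      using c RP XY by (intro mult_add_distrib_mat[of _ np np]) auto
    also have "minv (pmat Psi) * (pmat Psi * X) = X"
      using assoc_mult_mat[OF c(1,2) XY(1)] pmat_Psi_inverse(4) XY by simp
    also have "minv (pmat Psi) * (rmat Psi * Psi * Y) = (minv (pmat Psi) * (rmat Psi * Psi)) * Y"
      using assoc_mult_mat[OF c(1) RP XY(2)] by simp
    also have "minv (pmat Psi) * (rmat Psi * Psi) = R1 * Psi"
      unfolding R1_def using assoc_mult_mat[OF c(1,3,4)] by simp
    finally show ?thesis .
  qed
  show "R1 = E + R1 * Psi * H"
    using W[OF E H] pmat_rmat_EGHF_eqs(1) unfolding R1_def by simp
  have "Psi = minv (pmat Psi) * (pmat Psi * Psi)"
    using assoc_mult_mat[OF c(1,2,4)] pmat_Psi_inverse(4) c(4) by simp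
  then show "Psi = G + R1 * Psi * F"
    using W[OF G F] pmat_rmat_EGHF_eqs(2) by simp
qed

definition "M_Psi = four_block_mat R1 (R1 * Psi) (0\<^sub>m nm np) (0\<^sub>m nm nm)"

lemma M_Psi_carrier: "M_Psi \<in> carrier_mat n n"
  unfolding M_Psi_def using R1_carrier by simp

lemma nonneg_M_Psi: "nonneg_mat M_Psi"
  unfolding M_Psi_def
  using nonneg_mat_four_block_iff[OF R1_carrier _ zero_carrier_mat zero_carrier_mat, of "R1 * Psi"]
    nonneg_R1 nonneg_mat_mult[OF R1_carrier Psi_props(1) nonneg_R1 Psi_props(2)] nonneg_mat_zero
    R1_carrier Psi_props(1) by auto

lemma qbd_map_M_Psi: "qbd_map M_Psi = M_Psi"
proof -
  note c = R1_carrier Psi_props(1)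
  have RP: "R1 * Psi \<in> carrier_mat np nm" using c by auto
  have "qbd_map M_Psi = four_block_mat (R1 * Psi * H + E) ((R1 * (R1 * Psi) + R1 * Psi * 0\<^sub>m nm nm) * F + R1 * G)
      (0\<^sub>m nm nm * H) ((0\<^sub>m nm np * (R1 * Psi) + 0\<^sub>m nm nm * 0\<^sub>m nm nm) * F + 0\<^sub>m nm np * G)"
    unfolding M_Psi_def by (rule qbd_map_four_block[OF R1_carrier RP zero_carrier_mat zero_carrier_mat])
  also have "\<dots> = M_Psi" unfolding M_Psi_def
  proof (rule cong_four_block_mat)
    show "R1 * Psi * H + E = R1" using R1_eq RP H E by (metis comm_add_mat mult_carrier_mat)
    have RRP: "R1 * (R1 * Psi) \<in> carrier_mat np nm" using c by auto
    have "(R1 * (R1 * Psi) + R1 * Psi * 0\<^sub>m nm nm) * F + R1 * G = R1 * (R1 * Psi) * F + R1 * G"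
      unfolding right_mult_zero_mat[OF RP] right_add_zero_mat[OF RRP] ..
    also have "R1 * (R1 * Psi) * F = R1 * (R1 * Psi * F)" by (rule assoc_mult_mat[OF R1_carrier RP F])
    also have "R1 * (R1 * Psi * F) + R1 * G = R1 * (R1 * Psi * F + G)"
      using RP F G by (intro mult_add_distrib_mat[symmetric, OF R1_carrier]) auto
    also have "R1 * Psi * F + G = Psi" using Psi_eq RP F G by (metis comm_add_mat mult_carrier_mat)
    finally show "(R1 * (R1 * Psi) + R1 * Psi * 0\<^sub>m nm nm) * F + R1 * G = R1 * Psi" .
  qed (use c F G H in simp_all)
  finally show ?thesis .
qed

lemma RD_le_M_Psi: "le_mat RD M_Psi"
  using RD_min_sol M_Psi_carrier nonneg_M_Psi qbd_map_M_Psi unfolding min_nonneg_sol_def by auto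

text \<open>From RD \<le> M_Psi we get Phi \<le> G + R1 Psi F = Psi; the reverse inequality holds by minimality of Psi.\<close>
lemma Phi_eq_Psi: "Phi = Psi"
proof -
  have RP: "R1 * Psi \<in> carrier_mat np nm" using R1_carrier Psi_props(1) by auto
  have "le_mat (four_block_mat RD11 RD12 (0\<^sub>m nm np) (0\<^sub>m nm nm)) M_Psi"
    using RD_le_M_Psi RD_eq_upper_blocks by simp
  then have "le_mat RD12 (R1 * Psi)"
    using le_mat_four_block_iff[OF RD_blocks(1,2) zero_carrier_mat zero_carrier_mat
        R1_carrier RP zero_carrier_mat zero_carrier_mat]
    unfolding M_Psi_def by auto
  then have "le_mat (RD12 * F) (R1 * Psi * F)"
    by (intro le_mat_mult[OF RD_blocks(2) F RP F nonneg_RD_blocks(2) nonneg_EGHF(4) _ le_mat_refl])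
  then have "le_mat (G + RD12 * F) (G + R1 * Psi * F)"
    by (intro le_mat_add[of _ np nm]) (use G RD_blocks(2) F RP le_mat_refl in auto)
  then have "le_mat Phi Psi" unfolding Phi_def using Psi_eq by simp
  then show ?thesis using Psi_le_Phi le_mat_antisym by auto
qed

lemma RD11_eq_R1: "RD11 = R1"
proof -
  have "minv (pmat Psi) = U11"
    using minv_of_right_inverse(1)[OF pmat_carrier[OF Psi_props(1)] Umat_blocks(1)] pmat_Phi_mult_U11
    unfolding Phi_eq_Psi by simp
  then show ?thesis using RD11_eq_U11_rmat_Phi unfolding R1_def Phi_eq_Psi by simp
qed

lemma RD_eq_M_Psi: "RD = M_Psi"
  using RD_eq_upper_blocks unfolding RD12_eq_RD11_Phi RD11_eq_R1 Phi_eq_Psi M_Psi_def .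

subsection \<open>Psi is substochastic\<close>

definition "Tpp_shift = Tpp + lam \<cdot>\<^sub>m 1\<^sub>m np"
definition "Tmm_shift = Tmm + lam \<cdot>\<^sub>m 1\<^sub>m nm"

text \<open>A uniformized form of the Riccati equation: its fixed points are the zeros of riccati,
  and it is monotone on nonnegative matrices since the shifted diagonal blocks are nonnegative.\<close>
definition "unif_riccati X = (1 / (2 * lam)) \<cdot>\<^sub>m (Tpm + X * Tmm_shift + Tpp_shift * X + X * Tmp * X)"

lemma shift_carrier: "Tpp_shift \<in> carrier_mat np np" "Tmm_shift \<in> carrier_mat nm nm"
  unfolding Tpp_shift_def Tmm_shift_def using Tpp Tmm by auto

lemma nonneg_Tpp_shift: "nonneg_mat Tpp_shift"
  using shift_carrier Tpp Tpp_offdiag_nonneg Tpp_diag_ge unfolding Tpp_shift_def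
  by (intro nonneg_matI) (force simp: add_nonneg_nonneg)

lemma nonneg_Tmm_shift: "nonneg_mat Tmm_shift"
  using shift_carrier Tmm Tmm_offdiag_nonneg Tmm_diag_ge unfolding Tmm_shift_def
  by (intro nonneg_matI) (force simp: add_nonneg_nonneg)

lemma unif_riccati_carrier: "X \<in> carrier_mat np nm \<Longrightarrow> unif_riccati X \<in> carrier_mat np nm"
  unfolding unif_riccati_def using shift_carrier Tpm Tmp by auto

lemma nonneg_unif_riccati:
  assumes X: "X \<in> carrier_mat np nm" "nonneg_mat X"
  shows "nonneg_mat (unif_riccati X)"
proof -
  have "nonneg_mat (X * Tmm_shift)" by (rule nonneg_mat_mult[OF X(1) shift_carrier(2) X(2) nonneg_Tmm_shift])
  moreover have "nonneg_mat (Tpp_shift * X)" by (rule nonneg_mat_mult[OF shift_carrier(1) X(1) nonneg_Tpp_shift X(2)])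
  moreover have "nonneg_mat (X * Tmp * X)"
    by (rule nonneg_mat_mult[OF mult_carrier_mat[OF X(1) Tmp] X(1) nonneg_mat_mult[OF X(1) Tmp X(2) nonneg_Tmp] X(2)])
  ultimately have "nonneg_mat (Tpm + X * Tmm_shift + Tpp_shift * X + X * Tmp * X)"
    using X shift_carrier Tpm Tmp nonneg_Tpm by (intro nonneg_mat_add[of _ np nm]) auto
  then show ?thesis unfolding unif_riccati_def using lam_pos by (intro nonneg_mat_smult) auto
qed

lemma unif_riccati_mono:
  assumes X: "X \<in> carrier_mat np nm" "Y \<in> carrier_mat np nm" "nonneg_mat X" "le_mat X Y"
  shows "le_mat (unif_riccati X) (unif_riccati Y)"
proof -
  have XT: "le_mat (X * Tmp) (Y * Tmp)"
    by (rule le_mat_mult[OF X(1) Tmp X(2) Tmp X(3) nonneg_Tmp X(4) le_mat_refl])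
  have "le_mat (X * Tmm_shift) (Y * Tmm_shift)"
    by (rule le_mat_mult[OF X(1) shift_carrier(2) X(2) shift_carrier(2) X(3) nonneg_Tmm_shift X(4) le_mat_refl])
  moreover have "le_mat (Tpp_shift * X) (Tpp_shift * Y)"
    by (rule le_mat_mult[OF shift_carrier(1) X(1) shift_carrier(1) X(2) nonneg_Tpp_shift X(3) le_mat_refl X(4)])
  moreover have "le_mat (X * Tmp * X) (Y * Tmp * Y)"
    by (rule le_mat_mult[of _ np np _ nm])
      (use X Tmp XT nonneg_mat_mult[OF X(1) Tmp X(3) nonneg_Tmp] in auto)
  ultimately have "le_mat (Tpm + X * Tmm_shift + Tpp_shift * X + X * Tmp * X)
      (Tpm + Y * Tmm_shift + Tpp_shift * Y + Y * Tmp * Y)"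
    using X shift_carrier Tpm Tmp le_mat_refl by (intro le_mat_add[of _ np nm]) auto
  then show ?thesis unfolding unif_riccati_def using lam_pos by (intro le_mat_smult) auto
qed

lemma riccati_if_unif_riccati_fixed:
  assumes X: "X \<in> carrier_mat np nm" and fx: "unif_riccati X = X"
  shows "riccati X = 0\<^sub>m np nm"
proof (rule eq_matI)
  have a: "X * Tmm_shift = X * Tmm + lam \<cdot>\<^sub>m X" unfolding Tmm_shift_def
    using mult_add_distrib_mat[OF X Tmm, of "lam \<cdot>\<^sub>m 1\<^sub>m nm"] X mult_smult_distrib[OF X, of "1\<^sub>m nm" nm lam]
    by simp
  have b: "Tpp_shift * X = Tpp * X + lam \<cdot>\<^sub>m X" unfolding Tpp_shift_def
    using add_mult_distrib_mat[OF Tpp _ X, of "lam \<cdot>\<^sub>m 1\<^sub>m np"] X mult_smult_assoc_mat[OF _ X, of "1\<^sub>m np" np lam]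
    by simp
  fix i j assume "i < dim_row (0\<^sub>m np nm :: real mat)" "j < dim_col (0\<^sub>m np nm :: real mat)"
  then have ij: "i < np" "j < nm" by auto
  have "unif_riccati X $$ (i,j) = (1 / (2 * lam)) * (Tpm $$ (i,j) + (X * Tmm) $$ (i,j) + lam * X $$ (i,j)
      + (Tpp * X) $$ (i,j) + lam * X $$ (i,j) + (X * Tmp * X) $$ (i,j))"
    unfolding unif_riccati_def a b using ij X Tpm Tmm Tpp Tmp
    by (simp del: index_mult_mat add: index_mult_mat(2,3))
  then have "Tpm $$ (i,j) + (X * Tmm) $$ (i,j) + (Tpp * X) $$ (i,j) + (X * Tmp * X) $$ (i,j) = 0"
    using fx lam_pos by (simp add: field_simps)
  then show "riccati X $$ (i,j) = 0\<^sub>m np nm $$ (i,j)"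
    unfolding riccati_def using ij X Tpm Tmm Tpp Tmp by (simp del: index_mult_mat add: index_mult_mat(2,3))
qed (use X riccati_carrier in auto)

lemma row_sum_Tmm_shift: "l < nm \<Longrightarrow> row_sum Tmm_shift l = lam - row_sum Tmp l"
  unfolding Tmm_shift_def using Tmm by (simp add: row_sum_add[of _ nm nm] row_sum_smult[of _ nm nm] row_sum_one row_sum_Tmm)

lemma row_sum_Tpp_shift: "i < np \<Longrightarrow> row_sum Tpp_shift i = lam - row_sum Tpm i"
  unfolding Tpp_shift_def using Tpp by (simp add: row_sum_add[of _ np np] row_sum_smult[of _ np np] row_sum_one row_sum_Tpp)

text \<open>The quadratic term loses at most the row mass of X Tmp, which the term X Tmm_shift gives back.\<close>
lemma row_sum_unif_riccati_le:
  assumes X: "X \<in> carrier_mat np nm" "nonneg_mat X" "\<forall>i<np. row_sum X i \<le> 1" and i: "i < np"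
  shows "row_sum (unif_riccati X) i \<le> 1"
proof -
  have XT: "X * Tmp \<in> carrier_mat np np" using X Tmp by auto
  have shift: "row_sum (X * Tmm_shift) i = (\<Sum>l<nm. X $$ (i,l) * (lam - row_sum Tmp l))"
    using row_sum_mult[OF X(1) shift_carrier(2) i] row_sum_Tmm_shift by simp
  have quad: "row_sum (X * Tmp * X) i \<le> (\<Sum>l<nm. X $$ (i,l) * row_sum Tmp l)"
    using row_sum_mult_le[OF XT X(1) nonneg_mat_mult[OF X(1) Tmp X(2) nonneg_Tmp] X(3) i]
      row_sum_mult[OF X(1) Tmp i] by simp
  have "row_sum (X * Tmm_shift) i + row_sum (X * Tmp * X) i
      \<le> (\<Sum>l<nm. X $$ (i,l) * (lam - row_sum Tmp l) + X $$ (i,l) * row_sum Tmp l)"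
    unfolding shift sum.distrib using quad by simp
  also have "\<dots> = lam * row_sum X i" unfolding row_sum_def using X by (simp add: algebra_simps sum_distrib_left)
  also have "\<dots> \<le> lam" using X(3) i lam_pos by (simp add: mult_left_le)
  finally have A: "row_sum (X * Tmm_shift) i + row_sum (X * Tmp * X) i \<le> lam" .
  have "row_sum (Tpp_shift * X) i \<le> row_sum Tpp_shift i"
    by (rule row_sum_mult_le[OF shift_carrier(1) X(1) nonneg_Tpp_shift X(3) i])
  then have B: "row_sum (Tpp_shift * X) i \<le> lam - row_sum Tpm i" using row_sum_Tpp_shift[OF i] by simp
  have "row_sum (unif_riccati X) i = (1 / (2 * lam)) *
      (row_sum Tpm i + row_sum (X * Tmm_shift) i + row_sum (Tpp_shift * X) i + row_sum (X * Tmp * X) i)"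
    unfolding unif_riccati_def using i X shift_carrier Tpm Tmp
    by (simp add: row_sum_smult[of _ np nm] row_sum_add[of _ np nm])
  also have "\<dots> \<le> 1" using A B lam_pos by (simp add: field_simps)
  finally show ?thesis .
qed

definition "riccati_iter k = (unif_riccati ^^ k) (0\<^sub>m np nm)"

lemma riccati_iter_props:
  "riccati_iter k \<in> carrier_mat np nm \<and> nonneg_mat (riccati_iter k) \<and> (\<forall>i<np. row_sum (riccati_iter k) i \<le> 1)"
proof (induction k)
  case 0
  then show ?case unfolding riccati_iter_def using nonneg_mat_zero by (simp add: row_sum_def)
next
  case (Suc k)
  then show ?case unfolding riccati_iter_def
    using unif_riccati_carrier nonneg_unif_riccati row_sum_unif_riccati_le by simp
qed

lemma riccati_iter_carrier: "riccati_iter k \<in> carrier_mat np nm"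
  using riccati_iter_props by blast

lemma riccati_iter_Suc: "riccati_iter (Suc k) = unif_riccati (riccati_iter k)"
  unfolding riccati_iter_def by simp

lemma riccati_iter_mono: "le_mat (riccati_iter k) (riccati_iter (Suc k))"
proof (induction k)
  case 0
  then show ?case using riccati_iter_props[of 1] unfolding riccati_iter_def
    by (auto simp: le_mat_def nonneg_mat_def)
next
  case (Suc k)
  then show ?case unfolding riccati_iter_Suc[of "Suc k"]
    using unif_riccati_mono riccati_iter_props riccati_iter_Suc by metis
qed

lemma riccati_iter_index_bounds: "i < np \<Longrightarrow> j < nm \<Longrightarrow> 0 \<le> riccati_iter k $$ (i,j) \<and> riccati_iter k $$ (i,j) \<le> 1"
  using riccati_iter_props[of k] index_le_row_sum[of "riccati_iter k" i j]
  by (force simp: nonneg_mat_def)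

definition "riccati_lim = mat np nm (\<lambda>(i,j). SUP k. riccati_iter k $$ (i,j))"

lemma riccati_lim_carrier: "riccati_lim \<in> carrier_mat np nm"
  unfolding riccati_lim_def by simp

lemma riccati_iter_tendsto: "i < np \<Longrightarrow> j < nm \<Longrightarrow> (\<lambda>k. riccati_iter k $$ (i,j)) \<longlonglongrightarrow> riccati_lim $$ (i,j)"
proof -
  assume ij: "i < np" "j < nm"
  have "riccati_iter k $$ (i,j) \<le> riccati_iter (Suc k) $$ (i,j)" for k
    by (rule le_matD[OF riccati_iter_mono]) (use riccati_iter_carrier[of k] ij in auto)
  then have "incseq (\<lambda>k. riccati_iter k $$ (i,j))" by (rule incseq_SucI)
  moreover have "bdd_above (range (\<lambda>k. riccati_iter k $$ (i,j)))"
    using riccati_iter_index_bounds[OF ij] by (intro bdd_aboveI[of _ 1]) auto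
  ultimately show ?thesis unfolding riccati_lim_def using ij LIMSEQ_incseq_SUP by simp
qed

lemma nonneg_riccati_lim: "nonneg_mat riccati_lim"
proof (rule nonneg_matI)
  fix i j assume "i < dim_row riccati_lim" "j < dim_col riccati_lim"
  then have ij: "i < np" "j < nm" using riccati_lim_carrier by auto
  show "riccati_lim $$ (i,j) \<ge> 0"
    by (rule LIMSEQ_le_const[OF riccati_iter_tendsto[OF ij]]) (use riccati_iter_index_bounds[OF ij] in auto)
qed

lemma row_sum_riccati_lim: "i < np \<Longrightarrow> row_sum riccati_lim i \<le> 1"
proof -
  assume i: "i < np"
  have "(\<lambda>k. \<Sum>j<nm. riccati_iter k $$ (i,j)) \<longlonglongrightarrow> (\<Sum>j<nm. riccati_lim $$ (i,j))"
    by (intro tendsto_sum) (use riccati_iter_tendsto i in auto)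
  moreover have "(\<Sum>j<nm. riccati_iter k $$ (i,j)) \<le> 1" for k
    using riccati_iter_props[of k] riccati_iter_carrier[of k] i unfolding row_sum_def by auto
  ultimately show ?thesis unfolding row_sum_def using riccati_lim_carrier by (simp add: LIMSEQ_le_const2)
qed

lemma riccati_lim_fixed: "unif_riccati riccati_lim = riccati_lim"
proof (rule eq_matI)
  note c = riccati_iter_carrier riccati_lim_carrier
  note L = riccati_iter_tendsto
  have XTc: "riccati_iter k * Tmp \<in> carrier_mat np np" for k
    by (rule mult_carrier_mat[OF riccati_iter_carrier Tmp])
  fix i j assume "i < dim_row riccati_lim" "j < dim_col riccati_lim"
  then have ij: "i < np" "j < nm" using c by auto
  have const: "\<And>A i j. (\<lambda>k. A $$ (i,j)) \<longlonglongrightarrow> (A :: real mat) $$ (i,j)" by simp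
  have XT: "\<And>i j. i < np \<Longrightarrow> j < np \<Longrightarrow>
      (\<lambda>k. (riccati_iter k * Tmp) $$ (i,j)) \<longlonglongrightarrow> (riccati_lim * Tmp) $$ (i,j)"
    by (rule tendsto_index_mult_mat[OF c(1) Tmp c(2) Tmp L const])
  have index: "unif_riccati X $$ (i,j) = (1 / (2 * lam)) *
      (Tpm $$ (i,j) + (X * Tmm_shift) $$ (i,j) + (Tpp_shift * X) $$ (i,j) + (X * Tmp * X) $$ (i,j))"
    if "X \<in> carrier_mat np nm" for X
    unfolding unif_riccati_def using ij that shift_carrier Tpm Tmp
    by (simp del: index_mult_mat add: index_mult_mat(2,3))
  have "(\<lambda>k. unif_riccati (riccati_iter k) $$ (i,j)) \<longlonglongrightarrow> unif_riccati riccati_lim $$ (i,j)"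
    unfolding index[OF c(1)] index[OF c(2)]
    by (intro tendsto_intros tendsto_index_mult_mat[OF c(1) shift_carrier(2) c(2) shift_carrier(2) L const ij]
        tendsto_index_mult_mat[OF shift_carrier(1) c(1) shift_carrier(1) c(2) const L ij]
        tendsto_index_mult_mat[OF _ c(1) _ c(2) XT L ij])
      (use c Tmp XTc in auto)
  then have "(\<lambda>k. riccati_iter (Suc k) $$ (i,j)) \<longlonglongrightarrow> unif_riccati riccati_lim $$ (i,j)"
    by (simp add: riccati_iter_Suc)
  moreover have "(\<lambda>k. riccati_iter (Suc k) $$ (i,j)) \<longlonglongrightarrow> riccati_lim $$ (i,j)"
    using LIMSEQ_Suc[OF L[OF ij]] .
  ultimately show "unif_riccati riccati_lim $$ (i,j) = riccati_lim $$ (i,j)" using LIMSEQ_unique by blast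
qed (use riccati_lim_carrier unif_riccati_carrier in auto)

lemma row_sum_Psi_le: "i < np \<Longrightarrow> row_sum Psi i \<le> 1"
proof -
  assume i: "i < np"
  have "le_mat Psi riccati_lim"
    using Psi_props(4)[OF riccati_lim_carrier nonneg_riccati_lim
        riccati_if_unif_riccati_fixed[OF riccati_lim_carrier riccati_lim_fixed]] .
  then have "row_sum Psi i \<le> row_sum riccati_lim i"
    unfolding row_sum_def using le_matD i Psi_props(1) riccati_lim_carrier by (auto intro!: sum_mono)
  then show ?thesis using row_sum_riccati_lim[OF i] by simp
qed

subsection \<open>Invertibility of I - Psi H\<close>

definition "Jmat = 1\<^sub>m nm - \<beta> \<cdot>\<^sub>m (Tmm + Tmp * Psi)"

lemma Jmat_carrier: "Jmat \<in> carrier_mat nm nm"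
  unfolding Jmat_def using Tmm Tmp Psi_props(1) by auto

lemma Jmat_index: "i < nm \<Longrightarrow> j < nm \<Longrightarrow>
    Jmat $$ (i,j) = (if i = j then 1 else 0) - \<beta> * (Tmm $$ (i,j) + (Tmp * Psi) $$ (i,j))"
  unfolding Jmat_def using Tmm Tmp Psi_props(1) by (simp del: index_mult_mat add: index_mult_mat(2,3))

lemma z_mat_Jmat: "z_mat Jmat"
  unfolding z_mat_def
proof (intro allI impI)
  fix i j assume "i < dim_row Jmat" "j < dim_col Jmat" "i \<noteq> j"
  then have ij: "i < nm" "j < nm" "i \<noteq> j" using Jmat_carrier by auto
  have "(Tmp * Psi) $$ (i,j) \<ge> 0"
    using nonneg_matD[OF nonneg_mat_mult[OF Tmp Psi_props(1) nonneg_Tmp Psi_props(2)]] ij Tmp Psi_props(1) by simp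
  then show "Jmat $$ (i,j) \<le> 0" using Jmat_index ij Tmm_offdiag_nonneg[OF ij] beta_pos by simp
qed

text \<open>This is where Psi being substochastic is needed.\<close>
lemma row_sum_Jmat: "i < nm \<Longrightarrow> row_sum Jmat i \<ge> 1"
proof -
  assume i: "i < nm"
  have "row_sum (Tmp * Psi) i \<le> row_sum Tmp i"
    by (rule row_sum_mult_le[OF Tmp Psi_props(1) nonneg_Tmp _ i]) (use row_sum_Psi_le in auto)
  then have "row_sum Tmm i + row_sum (Tmp * Psi) i \<le> 0" using row_sum_Tmm[OF i] by simp
  moreover have "row_sum Jmat i = 1 - \<beta> * (row_sum Tmm i + row_sum (Tmp * Psi) i)"
    unfolding Jmat_def using i Tmm Tmp Psi_props(1)
    by (simp add: row_sum_diff[of _ nm nm] row_sum_add[of _ nm nm] row_sum_smult[of _ nm nm] row_sum_one)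
  ultimately show ?thesis using lam_pos by (simp add: divide_nonpos_pos)
qed

lemma Jmat_inverse: "minv Jmat * Jmat = 1\<^sub>m nm" "minv Jmat \<in> carrier_mat nm nm"
proof -
  have "row_sum Jmat i > 0" if "i < nm" for i using row_sum_Jmat[OF that] by linarith
  then have "\<forall>i<nm. (Jmat *\<^sub>v ones_vec nm) $ i > 0" by (simp add: mult_ones_vec[OF Jmat_carrier])
  then show "minv Jmat * Jmat = 1\<^sub>m nm" "minv Jmat \<in> carrier_mat nm nm"
    using z_mat_inverse_nonneg[OF Jmat_carrier z_mat_Jmat ones_vec_carrier[of nm]] by auto
qed

text \<open>The lower left block of Am * N = Bm.\<close>
lemma Tmm_H_eq: "(1\<^sub>m nm - \<beta> \<cdot>\<^sub>m Tmm) * H = \<beta> \<cdot>\<^sub>m Tmp + \<alpha> \<cdot>\<^sub>m (Tmp * E)"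
proof -
  have "four_block_mat
      ((1\<^sub>m np - \<alpha> \<cdot>\<^sub>m Tpp) * E + (- (\<beta> \<cdot>\<^sub>m Tpm)) * H) ((1\<^sub>m np - \<alpha> \<cdot>\<^sub>m Tpp) * G + (- (\<beta> \<cdot>\<^sub>m Tpm)) * F)
      ((- (\<alpha> \<cdot>\<^sub>m Tmp)) * E + (1\<^sub>m nm - \<beta> \<cdot>\<^sub>m Tmm) * H) ((- (\<alpha> \<cdot>\<^sub>m Tmp)) * G + (1\<^sub>m nm - \<beta> \<cdot>\<^sub>m Tmm) * F)
    = four_block_mat (1\<^sub>m np + \<beta> \<cdot>\<^sub>m Tpp) (\<alpha> \<cdot>\<^sub>m Tpm) (\<beta> \<cdot>\<^sub>m Tmp) (1\<^sub>m nm + \<alpha> \<cdot>\<^sub>m Tmm)"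
    using Am_mult_N unfolding Am_def Bm_def EGHF_eq_N[symmetric]
    by (subst (asm) mult_four_block_mat[OF Am_blocks_carrier E G H F])
  from four_block_mat_inject(3)[OF _ _ _ _ Bm_blocks_carrier this] E G H F Am_blocks_carrier
  have "(- (\<alpha> \<cdot>\<^sub>m Tmp)) * E + (1\<^sub>m nm - \<beta> \<cdot>\<^sub>m Tmm) * H = \<beta> \<cdot>\<^sub>m Tmp" by auto
  moreover have "(- (\<alpha> \<cdot>\<^sub>m Tmp)) * E = - (\<alpha> \<cdot>\<^sub>m (Tmp * E))"
    using uminus_mult_left_mat[of "\<alpha> \<cdot>\<^sub>m Tmp" E] mult_smult_assoc_mat[OF Tmp E] Tmp E by simp
  ultimately have LL: "- (\<alpha> \<cdot>\<^sub>m (Tmp * E)) + (1\<^sub>m nm - \<beta> \<cdot>\<^sub>m Tmm) * H = \<beta> \<cdot>\<^sub>m Tmp" by simp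
  show ?thesis
  proof (rule eq_matI)
    fix i j assume "i < dim_row (\<beta> \<cdot>\<^sub>m Tmp + \<alpha> \<cdot>\<^sub>m (Tmp * E))" "j < dim_col (\<beta> \<cdot>\<^sub>m Tmp + \<alpha> \<cdot>\<^sub>m (Tmp * E))"
    then have ij: "i < nm" "j < np" using Tmp E by auto
    show "((1\<^sub>m nm - \<beta> \<cdot>\<^sub>m Tmm) * H) $$ (i,j) = (\<beta> \<cdot>\<^sub>m Tmp + \<alpha> \<cdot>\<^sub>m (Tmp * E)) $$ (i,j)"
      using arg_cong[OF LL, of "\<lambda>M. M $$ (i,j)"] ij Tmp Tmm E H by simp
  qed (use Tmp Tmm E H in auto)
qed

lemma E_eq_R1_mult: "E = R1 * (1\<^sub>m np - Psi * H)"
proof -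
  have c: "R1 * Psi * H \<in> carrier_mat np np" using R1_carrier Psi_props(1) H by auto
  have PH: "Psi * H \<in> carrier_mat np np" using Psi_props(1) H by auto
  have "R1 * (1\<^sub>m np - Psi * H) = R1 * 1\<^sub>m np - R1 * (Psi * H)"
    by (rule mult_minus_distrib_mat[OF R1_carrier one_carrier_mat PH])
  also have "\<dots> = R1 - R1 * Psi * H"
    using assoc_mult_mat[OF R1_carrier Psi_props(1) H] R1_carrier by simp
  finally have eq: "R1 * (1\<^sub>m np - Psi * H) = R1 - R1 * Psi * H" .
  show ?thesis unfolding eq
  proof (rule eq_matI)
    fix i j assume "i < dim_row (R1 - R1 * Psi * H)" "j < dim_col (R1 - R1 * Psi * H)"
    then have ij: "i < np" "j < np" using c by auto
    have "R1 $$ (i,j) = E $$ (i,j) + (R1 * Psi * H) $$ (i,j)"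
      using arg_cong[OF R1_eq, of "\<lambda>M. M $$ (i,j)"] ij E c by (simp del: index_mult_mat)
    then show "E $$ (i,j) = (R1 - R1 * Psi * H) $$ (i,j)"
      using ij c R1_carrier by (simp del: index_mult_mat)
  qed (use E c in auto)
qed

text \<open>Apply Tmm_H_eq to x and use E x = 0 and x = Psi h.\<close>
lemma Jmat_mult_H_vec:
  assumes x: "x \<in> carrier_vec np" and Ex: "E *\<^sub>v x = 0\<^sub>v np"
    and h_def: "h = H *\<^sub>v x" and x_eq: "x = Psi *\<^sub>v h"
  shows "Jmat *\<^sub>v h = 0\<^sub>v nm"
proof (rule eq_vecI)
  have h: "h \<in> carrier_vec nm" unfolding h_def using H x by auto
  fix i assume "i < dim_vec (0\<^sub>v nm :: real vec)"
  then have i: "i < nm" by simp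
  have TP: "Tmp * Psi \<in> carrier_mat nm nm" using Tmp Psi_props(1) by auto
  have TEx: "((\<alpha> \<cdot>\<^sub>m (Tmp * E)) *\<^sub>v x) $ i = 0"
  proof -
    have "(Tmp * E) *\<^sub>v x = 0\<^sub>v nm" using assoc_mult_mat_vec[OF Tmp E x] Ex Tmp by (auto intro!: eq_vecI)
    then show ?thesis unfolding index_smult_mult_mat_vec[OF mult_carrier_mat[OF Tmp E] x i] using i by simp
  qed
  have "((1\<^sub>m nm - \<beta> \<cdot>\<^sub>m Tmm) *\<^sub>v h) $ i = ((\<beta> \<cdot>\<^sub>m Tmp + \<alpha> \<cdot>\<^sub>m (Tmp * E)) *\<^sub>v x) $ i"
    unfolding h_def Tmm_H_eq[symmetric] using assoc_mult_mat_vec[OF Am_blocks_carrier(4) H x] by simp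
  also have "\<dots> = ((\<beta> \<cdot>\<^sub>m Tmp) *\<^sub>v x) $ i + ((\<alpha> \<cdot>\<^sub>m (Tmp * E)) *\<^sub>v x) $ i"
    unfolding add_mult_distrib_mat_vec[OF smult_carrier_mat[OF Tmp] smult_carrier_mat[OF mult_carrier_mat[OF Tmp E]] x]
    using i Tmp by (simp del: index_mult_mat_vec)
  also have "\<dots> = \<beta> * (Tmp *\<^sub>v x) $ i"
    unfolding TEx index_smult_mult_mat_vec[OF Tmp x i] by simp
  also have "\<dots> = \<beta> * ((Tmp * Psi) *\<^sub>v h) $ i" unfolding x_eq using Tmp Psi_props(1) h by simp
  finally have "h $ i - \<beta> * (Tmm *\<^sub>v h) $ i = \<beta> * ((Tmp * Psi) *\<^sub>v h) $ i"
    using minus_mult_distrib_mat_vec[of "1\<^sub>m nm" nm nm "\<beta> \<cdot>\<^sub>m Tmm" h] index_smult_mult_mat_vec[OF Tmm h i] Tmm h i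
    by simp
  moreover have "(Jmat *\<^sub>v h) $ i = h $ i - \<beta> * ((Tmm *\<^sub>v h) $ i + ((Tmp * Psi) *\<^sub>v h) $ i)"
  proof -
    have K: "Tmm + Tmp * Psi \<in> carrier_mat nm nm" using Tmm TP by auto
    have "(Jmat *\<^sub>v h) $ i = h $ i - ((\<beta> \<cdot>\<^sub>m (Tmm + Tmp * Psi)) *\<^sub>v h) $ i"
      unfolding Jmat_def minus_mult_distrib_mat_vec[OF one_carrier_mat smult_carrier_mat[OF K] h]
      using h i carrier_matD[OF K] by (simp del: index_mult_mat_vec)
    then show ?thesis
      unfolding index_smult_mult_mat_vec[OF K h i] add_mult_distrib_mat_vec[OF Tmm TP h]
      using i carrier_matD[OF TP] by (simp del: index_mult_mat_vec)
  qed
  ultimately show "(Jmat *\<^sub>v h) $ i = 0\<^sub>v nm $ i" using i by (simp add: algebra_simps)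
qed (use Jmat_carrier in auto)

lemma I_minus_Psi_H_kernel:
  assumes x: "x \<in> carrier_vec np" and Cx: "(1\<^sub>m np - Psi * H) *\<^sub>v x = 0\<^sub>v np"
  shows "x = 0\<^sub>v np"
proof -
  define h where "h = H *\<^sub>v x"
  have h: "h \<in> carrier_vec nm" unfolding h_def using H x by auto
  have PH: "Psi * H \<in> carrier_mat np np" using Psi_props(1) H by auto
  have x_eq: "x = Psi *\<^sub>v h"
  proof (rule eq_vecI)
    have "x - (Psi * H) *\<^sub>v x = 0\<^sub>v np"
      using Cx minus_mult_distrib_mat_vec[OF one_carrier_mat PH x] x by simp
    moreover have "(Psi * H) *\<^sub>v x = Psi *\<^sub>v h" unfolding h_def using Psi_props(1) H x by simp
    ultimately have d: "x - Psi *\<^sub>v h = 0\<^sub>v np" by simp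
    fix i assume "i < dim_vec (Psi *\<^sub>v h)"
    then show "x $ i = (Psi *\<^sub>v h) $ i"
      using arg_cong[OF d, of "\<lambda>v. v $ i"] x Psi_props(1) by simp
  qed (use x Psi_props(1) in auto)
  have "E *\<^sub>v x = R1 *\<^sub>v ((1\<^sub>m np - Psi * H) *\<^sub>v x)"
    unfolding E_eq_R1_mult by (rule assoc_mult_mat_vec[OF R1_carrier minus_carrier_mat[OF PH] x])
  then have Ex: "E *\<^sub>v x = 0\<^sub>v np" unfolding Cx using R1_carrier by (auto intro!: eq_vecI)
  have Jh: "Jmat *\<^sub>v h = 0\<^sub>v nm" by (rule Jmat_mult_H_vec[OF x Ex h_def x_eq])
  have "h = (minv Jmat * Jmat) *\<^sub>v h" using Jmat_inverse h by simp
  also have "\<dots> = minv Jmat *\<^sub>v (Jmat *\<^sub>v h)" by (rule assoc_mult_mat_vec[OF Jmat_inverse(2) Jmat_carrier h])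
  also have "\<dots> = 0\<^sub>v nm" unfolding Jh using Jmat_inverse(2) by (auto intro!: eq_vecI)
  finally show ?thesis using x_eq Psi_props(1) by (auto intro!: eq_vecI)
qed

lemma I_minus_Psi_H_inverse:
  "invertible_mat (1\<^sub>m np - Psi * H)" "(1\<^sub>m np - Psi * H) * minv (1\<^sub>m np - Psi * H) = 1\<^sub>m np"
  "minv (1\<^sub>m np - Psi * H) \<in> carrier_mat np np"
proof -
  have "1\<^sub>m np - Psi * H \<in> carrier_mat np np" using Psi_props(1) H by auto
  from minv_if_trivial_kernel[OF this I_minus_Psi_H_kernel]
  show "invertible_mat (1\<^sub>m np - Psi * H)" "(1\<^sub>m np - Psi * H) * minv (1\<^sub>m np - Psi * H) = 1\<^sub>m np"
    "minv (1\<^sub>m np - Psi * H) \<in> carrier_mat np np" by auto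
qed

lemma E_mult_minv: "E * minv (1\<^sub>m np - Psi * H) = R1"
proof -
  have "E * minv (1\<^sub>m np - Psi * H) = R1 * ((1\<^sub>m np - Psi * H) * minv (1\<^sub>m np - Psi * H))"
    unfolding E_eq_R1_mult
    by (rule assoc_mult_mat[OF R1_carrier _ I_minus_Psi_H_inverse(3)]) (use Psi_props(1) H in auto)
  then show ?thesis using I_minus_Psi_H_inverse(2) R1_carrier by simp
qed

end

theorem theorem7:
  fixes np nm :: nat and T Tpp Tpm Tmp Tmm Psi E G H F RD :: "real mat"
    and lam mu :: real
  assumes np: "np > 0" and nm: "nm > 0"
    and Tpp: "Tpp \<in> carrier_mat np np" and Tpm: "Tpm \<in> carrier_mat np nm"
    and Tmp: "Tmp \<in> carrier_mat nm np" and Tmm: "Tmm \<in> carrier_mat nm nm"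
    and T: "T = four_block_mat Tpp Tpm Tmp Tmm"
    and gen: "generator (np + nm) T"
    and Psi: "min_nonneg_sol np nm
                (\<lambda>X. Tpm + X * Tmm + Tpp * X + X * Tmp * X = 0\<^sub>m np nm) Psi"
    and lam: "lam > 0" "\<forall>i<np+nm. \<bar>T $$ (i,i)\<bar> \<le> lam"
    and mu: "mu > 0" "\<forall>i<np+nm. \<bar>T $$ (i,i)\<bar> \<le> mu"
    and EGHF: "four_block_mat E G H F =
       minv (four_block_mat (1\<^sub>m np - (1/mu) \<cdot>\<^sub>m Tpp) (- ((1/lam) \<cdot>\<^sub>m Tpm))
                            (- ((1/mu) \<cdot>\<^sub>m Tmp)) (1\<^sub>m nm - (1/lam) \<cdot>\<^sub>m Tmm))
       * four_block_mat (1\<^sub>m np + (1/lam) \<cdot>\<^sub>m Tpp) ((1/mu) \<cdot>\<^sub>m Tpm)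
                        ((1/lam) \<cdot>\<^sub>m Tmp) (1\<^sub>m nm + (1/mu) \<cdot>\<^sub>m Tmm)"
    and E: "E \<in> carrier_mat np np" and G: "G \<in> carrier_mat np nm"
    and H: "H \<in> carrier_mat nm np" and F: "F \<in> carrier_mat nm nm"
    and RD: "min_nonneg_sol (np + nm) (np + nm)
       (\<lambda>R. R * R * four_block_mat (0\<^sub>m np np) (0\<^sub>m np nm) (0\<^sub>m nm np) F
            + R * four_block_mat (0\<^sub>m np np) G H (0\<^sub>m nm nm)
            + four_block_mat E (0\<^sub>m np nm) (0\<^sub>m nm np) (0\<^sub>m nm nm) = R) RD"
  shows "let K = Tpp + Psi * Tmp;
             R1 = E * minv (1\<^sub>m np - Psi * H)
         in invertible_mat (1\<^sub>m np - Psi * H) \<and>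
            invertible_mat (1\<^sub>m np - (1/mu) \<cdot>\<^sub>m K) \<and>
            R1 = minv (1\<^sub>m np - (1/mu) \<cdot>\<^sub>m K) * (1\<^sub>m np + (1/lam) \<cdot>\<^sub>m K) \<and>
            RD = four_block_mat R1 (R1 * Psi) (0\<^sub>m nm np) (0\<^sub>m nm nm)"
proof -
  interpret fluid_qbd np nm T Tpp Tpm Tmp Tmm Psi E G H F RD lam mu
    by (rule fluid_qbd.intro[OF Tpp Tpm Tmp Tmm T gen Psi lam(1,2) mu(1,2) EGHF E G H F RD])
  have "invertible_mat (1\<^sub>m np - (1/mu) \<cdot>\<^sub>m (Tpp + Psi * Tmp))"
    using pmat_Psi_inverse(1) unfolding pmat_def kmat_def .
  moreover have "E * minv (1\<^sub>m np - Psi * H) =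
      minv (1\<^sub>m np - (1/mu) \<cdot>\<^sub>m (Tpp + Psi * Tmp)) * (1\<^sub>m np + (1/lam) \<cdot>\<^sub>m (Tpp + Psi * Tmp))"
    using E_mult_minv unfolding R1_def pmat_def rmat_def kmat_def .
  moreover have "RD = four_block_mat (E * minv (1\<^sub>m np - Psi * H)) (E * minv (1\<^sub>m np - Psi * H) * Psi)
      (0\<^sub>m nm np) (0\<^sub>m nm nm)"
    using RD_eq_M_Psi unfolding M_Psi_def E_mult_minv .
  ultimately show ?thesis using I_minus_Psi_H_inverse(1) unfolding Let_def by auto
qed

end
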